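(* Let $Q$ be a quantum circuit acting on $w$ qubits and let $N\ge 64$ be a power of two; set $l=\log_2 N+1$. Let $R_1^{(N)}$ be the circuit with registers: an $l$-qubit counter register $\mathsf{C}$ whose first qubit $\mathsf{C}^{(1)}$ is the first qubit of the whole circuit and holds the most significant bit, a single-qubit register $\mathsf{Q}$, and for each $j\in\{1,\dots,2N\}$ a $(w-1)$-qubit register $\mathsf{R}_j$ and a single-qubit register $\mathsf{X}_j$; it performs, for $j=1,\dots,2N$ in turn: apply $Q$ to $(\mathsf{Q},\mathsf{R}_j)$ (with $\mathsf{Q}$ as $Q$'s first qubit), apply CNOT with control $\mathsf{Q}$ and target $\mathsf{X}_j$, and apply the controlled-$U_{+1}^{(2N)}$ with control $\mathsf{Q}$ and target $\mathsf{C}$, where $U^{(2N)}_{+1}|j\rangle=|(j+1)\bmod 2N\rangle$; its output qubit is $\mathsf{C}^{(1)}$. Suppose $\frac12-\varepsilon\le p_{\mathrm{acc}}(Q,1)\le\frac12+\varepsilon$ for some $\varepsilon\in[0,\frac18]$ with $3N^{-1/3}+4\varepsilon\le 1$. Then \[p_{\mathrm{acc}}(R_1^{(N)},1)<3N^{-1/3}+4\varepsilon.\]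
   Context: For a circuit $Q$ on $w$ qubits and $1\le k\le w$, $p_{\mathrm{acc}}(Q,k)=\mathrm{tr}\,\Pi_{\mathrm{acc}}Q\rho^{(w,k)}_{\mathrm{init}}Q^\dagger$, where $\rho^{(w,k)}_{\mathrm{init}}=(|0\rangle\langle0|)^{\otimes k}\otimes(I/2)^{\otimes(w-k)}$ and $\Pi_{\mathrm{acc}}=|0\rangle\langle0|\otimes I^{\otimes(w-1)}$; i.e., the first $k$ qubits start in $|0\rangle$, the remaining qubits are maximally mixed, and acceptance means the first qubit is measured as $0$ in the computational basis. For $R_1^{(N)}$, only $\mathsf{C}^{(1)}$ is clean; all other qubits start maximally mixed. The counter register $\mathsf{C}$ encodes an integer in $\{0,\dots,2N-1\}$ in binary. *)

theory Defs
  imports Complex_Main "Jordan_Normal_Form.Matrix" "Jordan_Normal_Form.Conjugate"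
begin

definition adj :: "complex mat \<Rightarrow> complex mat" where
  "adj A = mat (dim_col A) (dim_row A) (\<lambda>(i,j). cnj (A $$ (j,i)))"

definition mtrace :: "complex mat \<Rightarrow> complex" where
  "mtrace A = (\<Sum>i<dim_row A. A $$ (i,i))"

definition unitary_mat :: "complex mat \<Rightarrow> bool" where
  "unitary_mat U \<longleftrightarrow> U * adj U = 1\<^sub>m (dim_row U) \<and> adj U * U = 1\<^sub>m (dim_col U)"

text \<open>Computational basis of n qubits: basis index i < 2^n; the qubit at position p
  (p = 0 is the first qubit) is the bit of weight 2^(n-1-p), i.e. the first qubit is the
  most significant bit.\<close>
definition qbit :: "nat \<Rightarrow> nat \<Rightarrow> nat \<Rightarrow> nat" where
  "qbit n p i = (i div 2 ^ (n - 1 - p)) mod 2"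

definition sub_index :: "nat \<Rightarrow> nat list \<Rightarrow> nat \<Rightarrow> nat" where
  "sub_index n ps i = (\<Sum>t<length ps. qbit n (ps ! t) i * 2 ^ (length ps - 1 - t))"

definition embed :: "nat \<Rightarrow> nat list \<Rightarrow> complex mat \<Rightarrow> complex mat" where
  "embed n ps G = mat (2 ^ n) (2 ^ n) (\<lambda>(i,j).
     if (\<forall>p<n. p \<notin> set ps \<longrightarrow> qbit n p i = qbit n p j)
     then G $$ (sub_index n ps i, sub_index n ps j) else 0)"

definition perm_mat :: "nat \<Rightarrow> (nat \<Rightarrow> nat) \<Rightarrow> complex mat" where
  "perm_mat d f = mat d d (\<lambda>(a,b). if a = f b then 1 else 0)"

text \<open>CNOT on two qubits, control = first qubit.\<close>
definition CNOT :: "complex mat" where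
  "CNOT = perm_mat 4 (\<lambda>b. if b div 2 = 1 then 2 + (1 - b mod 2) else b)"

text \<open>Controlled U_{+1}^{(2^l)} on 1 + l qubits: control = first qubit, target = the
  remaining l qubits encoding j in {0..2^l-1}, mapped to (j+1) mod 2^l.\<close>
definition C_inc :: "nat \<Rightarrow> complex mat" where
  "C_inc l = perm_mat (2 ^ (l + 1))
     (\<lambda>b. if b div 2 ^ l = 1 then 2 ^ l + (b mod 2 ^ l + 1) mod 2 ^ l else b)"

definition rho_init :: "nat \<Rightarrow> nat \<Rightarrow> complex mat" where
  "rho_init n k = mat (2 ^ n) (2 ^ n)
     (\<lambda>(i,j). if i = j \<and> i div 2 ^ (n - k) = 0 then 1 / 2 ^ (n - k) else 0)"

definition Pi_acc :: "nat \<Rightarrow> complex mat" where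
  "Pi_acc n = mat (2 ^ n) (2 ^ n) (\<lambda>(i,j). if i = j \<and> qbit n 0 i = 0 then 1 else 0)"

definition p_acc :: "nat \<Rightarrow> complex mat \<Rightarrow> nat \<Rightarrow> real" where
  "p_acc n U k = Re (mtrace (Pi_acc n * U * rho_init n k * adj U))"

text \<open>Parameters: w = number of qubits of Q, N, l = number of counter qubits (2N = 2^l).
  Layout: positions 0..l-1 = counter C (position 0 = C^(1), most significant),
  position l = Q, then for j = 1..2N: w-1 qubits R_j followed by one qubit X_j.\<close>
definition R1_qubits :: "nat \<Rightarrow> nat \<Rightarrow> nat \<Rightarrow> nat" where
  "R1_qubits w N l = l + 1 + 2 * N * w"

definition R_reg :: "nat \<Rightarrow> nat \<Rightarrow> nat \<Rightarrow> nat list" where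
  "R_reg w l j = [l + 1 + (j - 1) * w ..< l + 1 + (j - 1) * w + (w - 1)]"

definition X_pos :: "nat \<Rightarrow> nat \<Rightarrow> nat \<Rightarrow> nat" where
  "X_pos w l j = l + 1 + (j - 1) * w + (w - 1)"

definition R1_step :: "nat \<Rightarrow> nat \<Rightarrow> nat \<Rightarrow> complex mat \<Rightarrow> nat \<Rightarrow> complex mat" where
  "R1_step w N l Q j =
     embed (R1_qubits w N l) (l # [0..<l]) (C_inc l)
   * embed (R1_qubits w N l) [l, X_pos w l j] CNOT
   * embed (R1_qubits w N l) (l # R_reg w l j) Q"

fun R1_upto :: "nat \<Rightarrow> nat \<Rightarrow> nat \<Rightarrow> complex mat \<Rightarrow> nat \<Rightarrow> complex mat" where
  "R1_upto w N l Q 0 = 1\<^sub>m (2 ^ R1_qubits w N l)"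
| "R1_upto w N l Q (Suc j) = R1_step w N l Q (Suc j) * R1_upto w N l Q j"

definition R1 :: "nat \<Rightarrow> nat \<Rightarrow> nat \<Rightarrow> complex mat \<Rightarrow> complex mat" where
  "R1 w N l Q = R1_upto w N l Q (2 * N)"

end

theory Submission
  imports Defs
begin

text \<open>
  Fix a column of \<open>R\<^sub>1\<close>, i.e. an initial basis state. The CNOT into the fresh register
  \<open>X\<^sub>j\<close> records the output bit of the \<open>j\<close>-th copy of \<open>Q\<close>, so all amplitudes of the column
  factor into products of entries of \<open>Q\<close>, and the squared moduli evolve like a Markov
  chain on the bit held by \<open>\<^bold>Q\<close>: the counter ends at \<open>c + k mod 2N\<close>, where \<open>c\<close> is its initial
  value and \<open>k\<close> is the number of ones the chain emits in \<open>2N\<close> steps. Averaging over the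
  maximally mixed registers \<open>R\<^sub>j\<close> turns the transition weights into a doubly stochastic
  matrix \<open>T\<close> with \<open>T\<^sub>0\<^sub>0 = p\<^sub>a\<^sub>c\<^sub>c(Q,1)\<close>, whose successive \<open>\<plusminus>1\<close> increments have
  correlation \<open>\<delta> = 2T\<^sub>0\<^sub>0 - 1\<close>, and \<open>\<bar>\<delta>\<bar> \<le> 2\<epsilon> \<le> 1/4\<close>.

  The output bit is \<open>0\<close> iff \<open>c + k mod 2N < N\<close>; for uniform \<open>c < N\<close> this has probability at
  most \<open>\<bar>k - N\<bar>/N\<close>. With \<open>\<bar>\<delta>\<bar> \<le> 1/4\<close> the second moment of \<open>2k - t\<close> after \<open>t\<close> steps is at
  most \<open>5t/3\<close>, so by Cauchy-Schwarz \<open>p\<^sub>a\<^sub>c\<^sub>c(R\<^sub>1,1) \<le> \<surd>(5N/6)/N < N\<^sup>-\<^sup>1\<^sup>/\<^sup>3\<close>.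
\<close>

fun nat_of_bits :: "nat \<Rightarrow> (nat \<Rightarrow> nat) \<Rightarrow> nat" where
  "nat_of_bits 0 b = 0"
| "nat_of_bits (Suc L) b = 2 * nat_of_bits L b + b L"

lemma qbit_less_2 [simp]: "qbit n p i < 2"
  by (simp add: qbit_def)

lemma div_less_2: "a < 2 * D \<Longrightarrow> (a::nat) div D < 2"
  by (simp add: less_mult_imp_div_less mult.commute)

lemma qbit_0_eq_0_iff: "n \<ge> 1 \<Longrightarrow> i < 2 ^ n \<Longrightarrow> qbit n 0 i = 0 \<longleftrightarrow> i < 2 ^ (n - 1)"
proof -
  assume n: "n \<ge> 1" and i: "i < 2 ^ n"
  have "(2::nat) ^ n = 2 * 2 ^ (n - 1)" using n by (cases n) auto
  then have "i div 2 ^ (n - 1) < 2" using i by (simp add: div_less_2)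
  then show ?thesis by (auto simp: qbit_def div_eq_0_iff)
qed

lemma sum_qbit_0_eq_0:
  assumes "n \<ge> 1"
  shows "(\<Sum>x<2 ^ n. if qbit n 0 x = 0 then f x else 0) = (\<Sum>x<2 ^ (n - 1). f x)"
proof -
  have "(\<Sum>x<2 ^ n. if qbit n 0 x = 0 then f x else 0) = (\<Sum>x<2 ^ n. if x < 2 ^ (n - 1) then f x else 0)"
    using assms by (intro sum.cong refl) (simp add: qbit_0_eq_0_iff)
  also have "\<dots> = sum f {x\<in>{..<2 ^ n}. x < 2 ^ (n - 1)}"
    by (subst sum.inter_filter) auto
  also have "{x\<in>{..<2 ^ n}. x < 2 ^ (n - 1)} = {..<2 ^ (n - 1) :: nat}"
    by (auto intro: less_le_trans)
  finally show ?thesis .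
qed

lemma nat_of_bits_less: "(\<forall>p<L. b p < 2) \<Longrightarrow> nat_of_bits L b < 2 ^ L"
  by (induction L) auto

lemma nat_of_bits_cong: "(\<forall>p<L. b p = b' p) \<Longrightarrow> nat_of_bits L b = nat_of_bits L b'"
  by (induction L) auto

lemma qbit_Suc_div2: "p < L \<Longrightarrow> qbit (Suc L) p v = qbit L p (v div 2)"
proof -
  assume "p < L"
  then have "Suc L - 1 - p = Suc (L - 1 - p)" by auto
  then show ?thesis unfolding qbit_def by (simp add: div_mult2_eq)
qed

lemma qbit_nat_of_bits: "(\<forall>p<L. b p < 2) \<Longrightarrow> p < L \<Longrightarrow> qbit L p (nat_of_bits L b) = b p"
proof (induction L arbitrary: p)
  case 0
  then show ?case by simp
next
  case (Suc L)
  show ?case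
  proof (cases "p = L")
    case False
    then have "p < L" using Suc.prems by simp
    moreover have "(2 * nat_of_bits L b + b L) div 2 = nat_of_bits L b" using Suc.prems by auto
    ultimately show ?thesis using Suc by (simp add: qbit_Suc_div2)
  qed (use Suc.prems in \<open>simp add: qbit_def\<close>)
qed

lemma nat_of_bits_qbit: "v < 2 ^ L \<Longrightarrow> nat_of_bits L (\<lambda>p. qbit L p v) = v"
proof (induction L arbitrary: v)
  case 0
  then show ?case by simp
next
  case (Suc L)
  have "nat_of_bits L (\<lambda>p. qbit (Suc L) p v) = nat_of_bits L (\<lambda>p. qbit L p (v div 2))"
    by (rule nat_of_bits_cong) (simp add: qbit_Suc_div2)
  also have "\<dots> = v div 2" using Suc by simp
  finally show ?case by (simp add: qbit_def)
qed

lemma basis_eqI: "i < 2 ^ n \<Longrightarrow> j < 2 ^ n \<Longrightarrow> (\<forall>p<n. qbit n p i = qbit n p j) \<Longrightarrow> i = j"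
  by (metis nat_of_bits_cong nat_of_bits_qbit)

lemma nat_of_bits_eq_sum: "nat_of_bits L b = (\<Sum>t<L. b t * 2 ^ (L - 1 - t))"
proof (induction L)
  case 0
  then show ?case by simp
next
  case (Suc L)
  have "2 * (\<Sum>t<L. b t * 2 ^ (L - 1 - t)) = (\<Sum>t<L. b t * 2 ^ (Suc L - 1 - t))"
    by (simp add: sum_distrib_left)
      (rule sum.cong, auto simp: Suc_diff_Suc power_Suc[symmetric] simp del: power_Suc)
  then show ?case using Suc by simp
qed

lemma nat_of_bits_Suc: "nat_of_bits (Suc L) b = b 0 * 2 ^ L + nat_of_bits L (\<lambda>t. b (Suc t))"
  by (induction L arbitrary: b) (auto simp: algebra_simps)

lemma sub_index_eq_nat_of_bits: "sub_index n ps i = nat_of_bits (length ps) (\<lambda>t. qbit n (ps ! t) i)"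
  by (simp add: sub_index_def nat_of_bits_eq_sum)

lemma sub_index_less: "sub_index n ps i < 2 ^ length ps"
  by (simp add: sub_index_eq_nat_of_bits nat_of_bits_less)

lemma qbit_sub_index: "t < length ps \<Longrightarrow> qbit (length ps) t (sub_index n ps i) = qbit n (ps ! t) i"
  by (simp add: sub_index_eq_nat_of_bits qbit_nat_of_bits)

lemma sub_index_Cons: "sub_index n (p # ps) i = qbit n p i * 2 ^ length ps + sub_index n ps i"
  unfolding sub_index_eq_nat_of_bits length_Cons nat_of_bits_Suc by simp

lemma embed_carrier [simp]: "embed n ps G \<in> carrier_mat (2 ^ n) (2 ^ n)"
  by (simp add: embed_def)

lemma index_embed: "i < 2 ^ n \<Longrightarrow> j < 2 ^ n \<Longrightarrow> embed n ps G $$ (i, j) =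
   (if (\<forall>p<n. p \<notin> set ps \<longrightarrow> qbit n p i = qbit n p j)
    then G $$ (sub_index n ps i, sub_index n ps j) else 0)"
  by (simp add: embed_def)

lemma index_perm_mat: "a < d \<Longrightarrow> b < d \<Longrightarrow> perm_mat d f $$ (a, b) = (if a = f b then 1 else 0)"
  by (simp add: perm_mat_def)

lemma index_embed_perm_mat:
  assumes "i < 2 ^ n" "j < 2 ^ n"
    and "(\<forall>p<n. p \<notin> set ps \<longrightarrow> qbit n p i = qbit n p j) \<and>
         sub_index n ps i = f (sub_index n ps j) \<longleftrightarrow> j = k"
  shows "embed n ps (perm_mat (2 ^ length ps) f) $$ (i, j) = (if j = k then 1 else 0)"
  using assms by (auto simp: index_embed index_perm_mat sub_index_less simp del: One_nat_def)

lemma index_mult_mat_square: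
  "A \<in> carrier_mat d d \<Longrightarrow> B \<in> carrier_mat d d \<Longrightarrow> i < d \<Longrightarrow> j < d \<Longrightarrow>
   (A * B) $$ (i, j) = (\<Sum>k<d. A $$ (i, k) * B $$ (k, j))"
  by (simp add: index_mult_mat scalar_prod_def lessThan_atLeast0)

lemma sum_lessThan_single:
  fixes F :: "nat \<Rightarrow> 'a::comm_monoid_add"
  assumes "k0 < d" "\<And>k. k < d \<Longrightarrow> k \<noteq> k0 \<Longrightarrow> F k = 0"
  shows "(\<Sum>k<d. F k) = F k0"
proof -
  have "(\<Sum>k<d. F k) = (\<Sum>k<d. if k = k0 then F k else 0)"
    using assms by (intro sum.cong) auto
  then show ?thesis using assms by simp
qed

lemma sum_lessThan_mult_blocks:
  fixes a E :: nat and F :: "nat \<Rightarrow> 'b::comm_monoid_add"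
  shows "(\<Sum>u<a*E. F u) = (\<Sum>c<a. \<Sum>q<E. F (c*E + q))"
proof (induction a)
  case 0 then show ?case by simp
next
  case (Suc a)
  have "(\<Sum>u<Suc a*E. F u) = (\<Sum>u<a*E. F u) + (\<Sum>u\<in>{a*E..<a*E+E}. F u)"
    unfolding lessThan_atLeast0 by (subst sum.atLeastLessThan_concat[symmetric]) (auto simp: add.commute)
  also have "(\<Sum>u\<in>{a*E..<a*E+E}. F u) = (\<Sum>q<E. F (a*E + q))"
    by (rule sum.reindex_bij_witness[of _ "\<lambda>q. a*E + q" "\<lambda>u. u - a*E"]) auto
  finally show ?case using Suc by simp
qed

lemma index_mult_mat_unit_row:
  fixes A B :: "complex mat"
  assumes "A \<in> carrier_mat d d" "B \<in> carrier_mat d d" "x < d" "i < d" "y < d"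
    and "\<And>m. m < d \<Longrightarrow> A $$ (x, m) = (if m = y then 1 else 0)"
  shows "(A * B) $$ (x, i) = B $$ (y, i)"
proof -
  have "(A * B) $$ (x, i) = (\<Sum>k<d. A $$ (x, k) * B $$ (k, i))"
    using assms by (intro index_mult_mat_square) auto
  also have "\<dots> = A $$ (x, y) * B $$ (y, i)"
    using assms by (intro sum_lessThan_single) auto
  finally show ?thesis using assms by simp
qed

lemma index_Pi_acc_mult_rho_init:
  assumes U: "U \<in> carrier_mat (2 ^ n) (2 ^ n)" and a: "a < 2 ^ n" and b: "b < 2 ^ n"
  shows "(Pi_acc n * U * rho_init n 1) $$ (a, b) =
    (if qbit n 0 a = 0 \<and> b < 2 ^ (n - 1) then U $$ (a, b) / 2 ^ (n - 1) else 0)"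
proof -
  have Pi: "Pi_acc n \<in> carrier_mat (2 ^ n) (2 ^ n)" by (simp add: Pi_acc_def)
  have rho: "rho_init n 1 \<in> carrier_mat (2 ^ n) (2 ^ n)" by (simp add: rho_init_def)
  have "(Pi_acc n * U) $$ (a, b) = (\<Sum>k<2 ^ n. Pi_acc n $$ (a, k) * U $$ (k, b))"
    using Pi U a b by (intro index_mult_mat_square) auto
  also have "\<dots> = Pi_acc n $$ (a, a) * U $$ (a, b)"
    using a by (intro sum_lessThan_single) (auto simp: Pi_acc_def)
  finally have PU: "(Pi_acc n * U) $$ (a, b) = (if qbit n 0 a = 0 then U $$ (a, b) else 0)"
    using a by (simp add: Pi_acc_def)
  have "(Pi_acc n * U * rho_init n 1) $$ (a, b) =
      (\<Sum>k<2 ^ n. (Pi_acc n * U) $$ (a, k) * rho_init n 1 $$ (k, b))"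
    using Pi U rho a b by (intro index_mult_mat_square) auto
  also have "\<dots> = (Pi_acc n * U) $$ (a, b) * rho_init n 1 $$ (b, b)"
    using b by (intro sum_lessThan_single) (auto simp: rho_init_def)
  finally show ?thesis using PU b by (simp add: rho_init_def div_eq_0_iff)
qed

lemma cmod_mult_self: "cmod z * cmod z = Re z * Re z + Im z * Im z"
  using cmod_power2[of z] by (simp add: power2_eq_square)

lemma p_acc_1_column_sum:
  assumes U: "U \<in> carrier_mat (2 ^ n) (2 ^ n)" and n: "n \<ge> 1"
  shows "p_acc n U 1 = (\<Sum>i<2 ^ (n - 1). \<Sum>x<2 ^ n.
            if qbit n 0 x = 0 then (cmod (U $$ (x, i)))\<^sup>2 else 0) / 2 ^ (n - 1)"
proof -
  define d where "d = (2::nat) ^ n"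
  define M where "M = Pi_acc n * U * rho_init n 1"
  have Ud: "U \<in> carrier_mat d d" and adjU: "adj U \<in> carrier_mat d d"
    and M_carrier: "M \<in> carrier_mat d d"
    using U by (auto simp: d_def M_def adj_def Pi_acc_def rho_init_def)
  have "mtrace (M * adj U) = (\<Sum>a<d. (M * adj U) $$ (a, a))"
    using M_carrier adjU by (simp add: mtrace_def)
  also have "\<dots> = (\<Sum>a<d. \<Sum>b<d. M $$ (a, b) * adj U $$ (b, a))"
    using M_carrier adjU by (intro sum.cong refl index_mult_mat_square) auto
  also have "\<dots> = (\<Sum>a<d. \<Sum>b<d. M $$ (a, b) * cnj (U $$ (a, b)))"
    using Ud by (intro sum.cong refl) (auto simp: adj_def)
  finally have tr: "p_acc n U 1 = (\<Sum>a<d. \<Sum>b<d. Re (M $$ (a, b) * cnj (U $$ (a, b))))"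
    by (simp add: p_acc_def M_def Re_sum)
  have "Re (M $$ (a, b) * cnj (U $$ (a, b))) = (if qbit n 0 a = 0 \<and> b < 2 ^ (n - 1)
      then (cmod (U $$ (a, b)))\<^sup>2 / 2 ^ (n - 1) else 0)" if "a < d" "b < d" for a b
  proof -
    have "M $$ (a, b) = (if qbit n 0 a = 0 \<and> b < 2 ^ (n - 1) then U $$ (a, b) / 2 ^ (n - 1) else 0)"
      unfolding M_def by (rule index_Pi_acc_mult_rho_init[OF U]) (use that in \<open>simp_all add: d_def\<close>)
    then show ?thesis by (simp add: power2_eq_square cmod_mult_self add_divide_distrib)
  qed
  then have "p_acc n U 1 = (\<Sum>a<d. \<Sum>b<d. if qbit n 0 a = 0 \<and> b < 2 ^ (n - 1)
      then (cmod (U $$ (a, b)))\<^sup>2 / 2 ^ (n - 1) else 0)"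
    unfolding tr by (intro sum.cong refl) auto
  also have "\<dots> = (\<Sum>b<d. if b < 2 ^ (n - 1) then (\<Sum>a<d. if qbit n 0 a = 0
      then (cmod (U $$ (a, b)))\<^sup>2 else 0) / 2 ^ (n - 1) else 0)"
    by (subst sum.swap) (auto simp: sum_divide_distrib intro!: sum.cong)
  also have "\<dots> = (\<Sum>b\<in>{b\<in>{..<d}. b < 2 ^ (n - 1)}. (\<Sum>a<d. if qbit n 0 a = 0
      then (cmod (U $$ (a, b)))\<^sup>2 else 0) / 2 ^ (n - 1))"
    by (subst sum.inter_filter) auto
  also have "{b\<in>{..<d}. b < 2 ^ (n - 1)} = {..<2 ^ (n - 1)}"
    using n by (auto simp: d_def intro: less_le_trans)
  finally show ?thesis by (simp add: d_def sum_divide_distrib)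
qed

lemma unitary_col_norm:
  assumes U: "U \<in> carrier_mat d d" "unitary_mat U" and y: "y < d"
  shows "(\<Sum>x<d. (cmod (U $$ (x, y)))\<^sup>2) = 1"
proof -
  have adjU: "adj U \<in> carrier_mat d d" using U by (simp add: adj_def)
  have "1 = (adj U * U) $$ (y, y)" using U y by (simp add: unitary_mat_def)
  also have "\<dots> = (\<Sum>x<d. adj U $$ (y, x) * U $$ (x, y))"
    using adjU U y by (intro index_mult_mat_square) auto
  also have "\<dots> = (\<Sum>x<d. complex_of_real ((cmod (U $$ (x, y)))\<^sup>2))"
    using U y
    by (intro sum.cong refl) (simp add: adj_def, metis complex_norm_square mult.commute of_real_power)
  finally show ?thesis by (metis of_real_eq_1_iff of_real_sum)
qed

lemma unitary_row_norm:
  assumes U: "U \<in> carrier_mat d d" "unitary_mat U" and x: "x < d"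
  shows "(\<Sum>y<d. (cmod (U $$ (x, y)))\<^sup>2) = 1"
proof -
  have adjU: "adj U \<in> carrier_mat d d" using U by (simp add: adj_def)
  have "1 = (U * adj U) $$ (x, x)" using U x by (simp add: unitary_mat_def)
  also have "\<dots> = (\<Sum>y<d. U $$ (x, y) * adj U $$ (y, x))"
    using adjU U x by (intro index_mult_mat_square) auto
  also have "\<dots> = (\<Sum>y<d. complex_of_real ((cmod (U $$ (x, y)))\<^sup>2))"
    using U x by (intro sum.cong refl) (simp add: adj_def, metis complex_norm_square of_real_power)
  finally show ?thesis by (metis of_real_eq_1_iff of_real_sum)
qed

lemma mod_add_eq_iff_mod_sub:
  fixes c d q L :: nat
  assumes "c < L" "d < L" "q \<le> 1"
  shows "c = (d + q) mod L \<longleftrightarrow> d = (c + L - q) mod L"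
proof
  assume h: "c = (d + q) mod L"
  have "(c + L - q) mod L = ((d + q) mod L + (L - q)) mod L" using h assms by simp
  also have "\<dots> = (d + q + (L - q)) mod L" by (simp add: mod_add_left_eq)
  also have "d + q + (L - q) = d + L" using assms by simp
  finally show "d = (c + L - q) mod L" using assms by simp
next
  assume h: "d = (c + L - q) mod L"
  have "(d + q) mod L = ((c + L - q) mod L + q) mod L" using h by simp
  also have "\<dots> = (c + L - q + q) mod L" by (simp add: mod_add_left_eq)
  also have "c + L - q + q = c + L" using assms by simp
  finally show "c = (d + q) mod L" using assms by simp
qed

lemma mod_sub_add_cancel: "(c::nat) < L \<Longrightarrow> q \<le> 1 \<Longrightarrow> ((c + L - q) mod L + q) mod L = c"
  using mod_add_eq_iff_mod_sub[of c L "(c + L - q) mod L" q] by simp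

lemma mod_add_sub_cancel: "(d::nat) < L \<Longrightarrow> q \<le> 1 \<Longrightarrow> ((d + q) mod L + L - q) mod L = d"
  using mod_add_eq_iff_mod_sub[of "(d + q) mod L" L d q] by simp

lemma mod2_add_add_cancel: "a < 2 \<Longrightarrow> b < (2::nat) \<Longrightarrow> ((a + b) mod 2 + b) mod 2 = a"
  by (cases a; cases b) auto

lemma mod2_add_solve: "(a::nat) < 2 \<Longrightarrow> b < 2 \<Longrightarrow> (b + a) mod 2 = c \<Longrightarrow> a = (b + c) mod 2"
  by (cases a; cases b) auto

lemma mult_add_eqD:
  fixes a b a' b' L :: nat
  assumes "a * L + b = a' * L + b'" "b < L" "b' < L"
  shows "a = a' \<and> b = b'"
proof -
  have "(x * L + y) div L = x \<and> (x * L + y) mod L = y" if "y < L" for x y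
    using that by simp
  then show ?thesis using assms by metis
qed

lemma C_inc_index_eq_iff:
  fixes q q' c c' L :: nat
  assumes "q < 2" "q' < 2" "c < 2 ^ L" "c' < 2 ^ L"
  shows "q * 2 ^ L + c = q' * 2 ^ L + (c' + q') mod 2 ^ L \<longleftrightarrow>
         q' = q \<and> c' = (c + 2 ^ L - q) mod 2 ^ L"
  using mult_add_eqD[of q "2 ^ L" c q' "(c' + q') mod 2 ^ L"] assms
    mod_add_eq_iff_mod_sub[of c "2 ^ L" c' q']
  by auto

lemma CNOT_index_eq_iff:
  fixes q x q' x' :: nat
  assumes "q < 2" "x < 2" "q' < 2" "x' < 2"
  shows "2 * q + x = 2 * q' + (x' + q') mod 2 \<longleftrightarrow> q' = q \<and> x' = (x + q) mod 2"
  using assms by (cases q; cases x; cases q'; cases x') auto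

lemma C_inc_perm_apply:
  fixes q c L :: nat
  assumes "q < 2" "c < 2 ^ L"
  shows "(if (q * 2 ^ L + c) div 2 ^ L = 1 then 2 ^ L + ((q * 2 ^ L + c) mod 2 ^ L + 1) mod 2 ^ L
          else q * 2 ^ L + c) = q * 2 ^ L + (c + q) mod 2 ^ L"
  using assms by (auto dest!: less_2_cases)

lemma CNOT_perm_apply:
  fixes q x :: nat
  assumes "q < 2" "x < 2"
  shows "(if (2 * q + x) div 2 = 1 then 2 + (1 - (2 * q + x) mod 2) else 2 * q + x)
       = 2 * q + (x + q) mod 2"
  using assms by (cases q; cases x) auto

locale R1_circuit =
  fixes w N l :: nat and Q :: "complex mat"
  assumes w1: "w \<ge> 1" and Q_carrier: "Q \<in> carrier_mat (2 ^ w) (2 ^ w)"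
    and two_pow_l: "2 ^ l = 2 * N" and l1: "l \<ge> 1"
begin

definition "n = R1_qubits w N l"
definition "R_start j = l + 1 + (j - 1) * w"
definition "C_val i = sub_index n [0..<l] i"
definition "Q_val i = qbit n l i"
definition "R_val j i = sub_index n (R_reg w l j) i"
definition "X_val j i = qbit n (X_pos w l j) i"

lemma n_eq: "n = l + 1 + 2 * N * w"
  by (simp add: n_def R1_qubits_def)

lemma l_less_n: "l < n"
  by (simp add: n_eq)

lemma n_ge1: "n \<ge> 1"
  by (simp add: n_eq)

lemma N_ge1: "N \<ge> 1"
proof -
  have "(2::nat) ^ l \<ge> 2 ^ 1" using l1 by (intro power_increasing) auto
  then show ?thesis using two_pow_l by simp
qed

lemma R_start_bounds: "1 \<le> j \<Longrightarrow> j \<le> 2 * N \<Longrightarrow> l < R_start j \<and> R_start j + w \<le> n"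
proof -
  assume j: "1 \<le> j" "j \<le> 2 * N"
  have "(j - 1) * w + w = j * w" using j by (cases j) auto
  also have "\<dots> \<le> 2 * N * w" using j by (intro mult_le_mono1)
  finally show ?thesis using j by (simp add: R_start_def n_eq)
qed

lemma R_start_mono: "1 \<le> j \<Longrightarrow> j < J \<Longrightarrow> R_start j + w \<le> R_start J"
proof -
  assume j: "1 \<le> j" "j < J"
  have "(j - 1) * w + w = j * w" using j by (cases j) auto
  also have "\<dots> \<le> (J - 1) * w" using j by (intro mult_le_mono1) simp
  finally show ?thesis by (simp add: R_start_def)
qed

lemma R_start_Suc: "1 \<le> j \<Longrightarrow> R_start (Suc j) = R_start j + w"
  by (cases j) (auto simp: R_start_def)

lemma l_less_R_start: "1 \<le> J \<Longrightarrow> l < R_start J"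
  by (simp add: R_start_def)

lemma X_pos_eq: "X_pos w l j = R_start j + (w - 1)"
  by (simp add: X_pos_def R_start_def)

lemma X_pos_bounds: "1 \<le> j \<Longrightarrow> j \<le> 2 * N \<Longrightarrow> l < X_pos w l j \<and> X_pos w l j < n"
  using R_start_bounds[of j] w1 unfolding X_pos_eq by arith

lemma length_R_reg [simp]: "length (R_reg w l j) = w - 1"
  unfolding R_reg_def length_upt by simp

lemma nth_R_reg: "t < w - 1 \<Longrightarrow> R_reg w l j ! t = R_start j + t"
  unfolding R_reg_def R_start_def by (subst nth_upt) auto

lemma set_R_reg: "set (R_reg w l j) = {R_start j ..< R_start j + (w - 1)}"
  unfolding R_reg_def R_start_def set_upt by simp

lemma C_val_less: "C_val i < 2 ^ l"
  using sub_index_less[of n "[0..<l]" i] by (simp add: C_val_def)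

lemma R_val_less: "R_val j i < 2 ^ (w - 1)"
  using sub_index_less[of n "R_reg w l j" i] by (simp add: R_val_def)

lemma Q_val_less: "Q_val i < 2"
  by (simp add: Q_val_def)

lemma X_val_less: "X_val j i < 2"
  by (simp add: X_val_def)

lemma qbit_C_val: "t < l \<Longrightarrow> qbit l t (C_val i) = qbit n t i"
  using qbit_sub_index[of t "[0..<l]" n i] by (simp add: C_val_def)

lemma qbit_R_val: "t < w - 1 \<Longrightarrow> qbit (w - 1) t (R_val j i) = qbit n (R_start j + t) i"
  using qbit_sub_index[of t "R_reg w l j" n i] by (simp add: R_val_def nth_R_reg)

lemma C_val_nat_of_bits: "C_val i = nat_of_bits l (\<lambda>t. qbit n t i)"
  unfolding C_val_def sub_index_eq_nat_of_bits length_upt diff_zero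
  by (rule nat_of_bits_cong) simp

lemma R_val_nat_of_bits: "R_val j i = nat_of_bits (w - 1) (\<lambda>t. qbit n (R_start j + t) i)"
  unfolding R_val_def sub_index_eq_nat_of_bits length_R_reg
  by (rule nat_of_bits_cong) (simp add: nth_R_reg)

lemma C_val_eq_iff: "c < 2 ^ l \<Longrightarrow> C_val m = c \<longleftrightarrow> (\<forall>p<l. qbit n p m = qbit l p c)"
proof
  assume c: "c < 2 ^ l" "\<forall>p<l. qbit n p m = qbit l p c"
  have "C_val m = nat_of_bits l (\<lambda>t. qbit l t c)"
    unfolding C_val_nat_of_bits by (rule nat_of_bits_cong) (use c in auto)
  then show "C_val m = c" using nat_of_bits_qbit c by simp
qed (auto simp: qbit_C_val)

lemma R_val_eq_iff:
  "r < 2 ^ (w - 1) \<Longrightarrow> R_val j m = r \<longleftrightarrow> (\<forall>t<w - 1. qbit n (R_start j + t) m = qbit (w - 1) t r)"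
proof
  assume r: "r < 2 ^ (w - 1)" "\<forall>t<w - 1. qbit n (R_start j + t) m = qbit (w - 1) t r"
  have "R_val j m = nat_of_bits (w - 1) (\<lambda>t. qbit (w - 1) t r)"
    unfolding R_val_nat_of_bits by (rule nat_of_bits_cong) (use r in auto)
  then show "R_val j m = r" using nat_of_bits_qbit r by simp
qed (metis qbit_R_val)

lemma sub_index_C_inc: "sub_index n (l # [0..<l]) i = Q_val i * 2 ^ l + C_val i"
  by (simp add: sub_index_Cons Q_val_def C_val_def)

lemma sub_index_CNOT: "sub_index n [l, X_pos w l j] i = 2 * Q_val i + X_val j i"
  by (simp add: sub_index_Cons Q_val_def X_val_def sub_index_def)

lemma sub_index_Q: "sub_index n (l # R_reg w l j) i = Q_val i * 2 ^ (w - 1) + R_val j i"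
  by (simp add: sub_index_Cons Q_val_def R_val_def)

text \<open>The embedded controlled increment and CNOT are permutation matrices; row \<open>x\<close> has
  its single one in column \<open>inc_preimage x\<close> resp. \<open>cnot_preimage j x\<close>.\<close>

definition "inc_preimage x = nat_of_bits n (\<lambda>p.
  if p < l then qbit l p ((C_val x + 2 ^ l - Q_val x) mod 2 ^ l) else qbit n p x)"

lemma inc_preimage_less: "inc_preimage x < 2 ^ n"
  by (simp add: inc_preimage_def nat_of_bits_less)

lemma qbit_inc_preimage: "p < n \<Longrightarrow> qbit n p (inc_preimage x) =
  (if p < l then qbit l p ((C_val x + 2 ^ l - Q_val x) mod 2 ^ l) else qbit n p x)"
  unfolding inc_preimage_def by (rule qbit_nat_of_bits) auto

lemma C_val_inc_preimage: "C_val (inc_preimage x) = (C_val x + 2 ^ l - Q_val x) mod 2 ^ l"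
  using l_less_n by (subst C_val_eq_iff) (auto simp: qbit_inc_preimage)

lemma Q_val_inc_preimage: "Q_val (inc_preimage x) = Q_val x"
  using l_less_n by (simp add: Q_val_def qbit_inc_preimage)

lemma eq_inc_preimage_iff:
  assumes m: "m < 2 ^ n"
  shows "m = inc_preimage x \<longleftrightarrow> (\<forall>p<n. p \<notin> set (l # [0..<l]) \<longrightarrow> qbit n p x = qbit n p m) \<and>
    Q_val m = Q_val x \<and> C_val m = (C_val x + 2 ^ l - Q_val x) mod 2 ^ l"
proof
  assume h: "(\<forall>p<n. p \<notin> set (l # [0..<l]) \<longrightarrow> qbit n p x = qbit n p m) \<and>
    Q_val m = Q_val x \<and> C_val m = (C_val x + 2 ^ l - Q_val x) mod 2 ^ l"
  have "qbit n p m = qbit n p (inc_preimage x)" if p: "p < n" for p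
  proof -
    consider "p < l" | "p = l" | "\<not> p < l" "p \<noteq> l" by blast
    then show ?thesis
    proof cases
      case 1
      have "(C_val x + 2 ^ l - Q_val x) mod 2 ^ l < 2 ^ l" by simp
      then show ?thesis
        using 1 h p C_val_eq_iff[of "(C_val x + 2 ^ l - Q_val x) mod 2 ^ l" m]
        by (simp add: qbit_inc_preimage)
    next
      case 2
      then show ?thesis using h p l_less_n by (simp add: qbit_inc_preimage Q_val_def)
    next
      case 3
      then show ?thesis using h p by (simp add: qbit_inc_preimage)
    qed
  qed
  then show "m = inc_preimage x" by (simp add: basis_eqI[OF m inc_preimage_less])
qed (auto simp: qbit_inc_preimage C_val_inc_preimage Q_val_inc_preimage)

lemma index_embed_C_inc:
  assumes "x < 2 ^ n" "m < 2 ^ n"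
  shows "embed n (l # [0..<l]) (C_inc l) $$ (x, m) = (if m = inc_preimage x then 1 else 0)"
proof -
  have C_inc_eq: "C_inc l = perm_mat (2 ^ length (l # [0..<l]))
      (\<lambda>b. if b div 2 ^ l = 1 then 2 ^ l + (b mod 2 ^ l + 1) mod 2 ^ l else b)"
    by (simp add: C_inc_def)
  show ?thesis
    unfolding C_inc_eq by (rule index_embed_perm_mat[OF assms],
      simp only: sub_index_C_inc C_inc_perm_apply[OF Q_val_less C_val_less]
        C_inc_index_eq_iff[OF Q_val_less Q_val_less C_val_less C_val_less]
        eq_inc_preimage_iff[OF assms(2)] conj_assoc)
qed

definition "cnot_preimage j x = nat_of_bits n (\<lambda>p.
  if p = X_pos w l j then (X_val j x + Q_val x) mod 2 else qbit n p x)"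

lemma cnot_preimage_less: "cnot_preimage j x < 2 ^ n"
  by (simp add: cnot_preimage_def nat_of_bits_less)

lemma qbit_cnot_preimage: "p < n \<Longrightarrow> qbit n p (cnot_preimage j x) =
  (if p = X_pos w l j then (X_val j x + Q_val x) mod 2 else qbit n p x)"
  unfolding cnot_preimage_def by (rule qbit_nat_of_bits) auto

lemma eq_cnot_preimage_iff:
  assumes j: "1 \<le> j" "j \<le> 2 * N" and m: "m < 2 ^ n"
  shows "m = cnot_preimage j x \<longleftrightarrow> (\<forall>p<n. p \<notin> set [l, X_pos w l j] \<longrightarrow> qbit n p x = qbit n p m) \<and>
    Q_val m = Q_val x \<and> X_val j m = (X_val j x + Q_val x) mod 2"
proof
  assume h: "(\<forall>p<n. p \<notin> set [l, X_pos w l j] \<longrightarrow> qbit n p x = qbit n p m) \<and>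
    Q_val m = Q_val x \<and> X_val j m = (X_val j x + Q_val x) mod 2"
  have "qbit n p m = qbit n p (cnot_preimage j x)" if p: "p < n" for p
  proof -
    consider "p = l" | "p = X_pos w l j" | "p \<noteq> l" "p \<noteq> X_pos w l j" by blast
    then show ?thesis
    proof cases
      case 1
      then show ?thesis using h p X_pos_bounds[OF j] by (simp add: qbit_cnot_preimage Q_val_def)
    next
      case 2
      then show ?thesis using h p by (simp add: qbit_cnot_preimage X_val_def)
    next
      case 3
      then show ?thesis using h p by (simp add: qbit_cnot_preimage)
    qed
  qed
  then show "m = cnot_preimage j x" by (simp add: basis_eqI[OF m cnot_preimage_less])
next
  assume m_eq: "m = cnot_preimage j x"
  have X: "l < X_pos w l j" "X_pos w l j < n" using X_pos_bounds[OF j] by auto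
  have "Q_val m = Q_val x" using m_eq X l_less_n by (simp add: Q_val_def qbit_cnot_preimage)
  moreover have "X_val j m = (X_val j x + Q_val x) mod 2"
    using m_eq X by (simp add: X_val_def qbit_cnot_preimage)
  moreover have "\<forall>p<n. p \<notin> set [l, X_pos w l j] \<longrightarrow> qbit n p x = qbit n p m"
    using m_eq by (simp add: qbit_cnot_preimage)
  ultimately show "(\<forall>p<n. p \<notin> set [l, X_pos w l j] \<longrightarrow> qbit n p x = qbit n p m) \<and>
    Q_val m = Q_val x \<and> X_val j m = (X_val j x + Q_val x) mod 2" by blast
qed

lemma index_embed_CNOT:
  assumes "1 \<le> j" "j \<le> 2 * N" "x < 2 ^ n" "m < 2 ^ n"
  shows "embed n [l, X_pos w l j] CNOT $$ (x, m) = (if m = cnot_preimage j x then 1 else 0)"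
proof -
  have CNOT_eq: "CNOT = perm_mat (2 ^ length [l, X_pos w l j])
      (\<lambda>b. if b div 2 = 1 then 2 + (1 - b mod 2) else b)"
    by (simp add: CNOT_def)
  show ?thesis
    unfolding CNOT_eq by (rule index_embed_perm_mat[OF assms(3,4)],
      simp only: sub_index_CNOT CNOT_perm_apply[OF Q_val_less X_val_less]
        CNOT_index_eq_iff[OF Q_val_less X_val_less Q_val_less X_val_less]
        eq_cnot_preimage_iff[OF assms(1,2,4)] conj_assoc)
qed

lemma index_embed_Q:
  assumes "y < 2 ^ n" "k < 2 ^ n"
  shows "embed n (l # R_reg w l j) Q $$ (y, k) =
    (if (\<forall>p<n. p \<noteq> l \<and> \<not> (R_start j \<le> p \<and> p < R_start j + (w - 1)) \<longrightarrow> qbit n p y = qbit n p k)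
     then Q $$ (Q_val y * 2 ^ (w - 1) + R_val j y, Q_val k * 2 ^ (w - 1) + R_val j k) else 0)"
proof -
  have "(\<forall>p<n. p \<notin> set (l # R_reg w l j) \<longrightarrow> qbit n p y = qbit n p k) =
     (\<forall>p<n. p \<noteq> l \<and> \<not> (R_start j \<le> p \<and> p < R_start j + (w - 1)) \<longrightarrow> qbit n p y = qbit n p k)"
    by (auto simp: set_R_reg)
  then show ?thesis unfolding index_embed[OF assms] sub_index_Q by simp
qed

text \<open>After the first \<open>t\<close> blocks, column \<open>i\<close> is supported on states that agree with \<open>i\<close> on
  all registers not yet touched and whose \<open>\<^bold>Q\<close> bit is the last output copied to \<open>X\<^sub>t\<close>,
  i.e. \<open>X\<^sub>t\<close> holds its initial value XOR the \<open>\<^bold>Q\<close> bit.\<close>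

definition "column_invariant U t i \<longleftrightarrow> (\<forall>k<2 ^ n. U $$ (k, i) \<noteq> 0 \<longrightarrow>
   (\<forall>p. R_start (t + 1) \<le> p \<and> p < n \<longrightarrow> qbit n p k = qbit n p i) \<and>
   Q_val k = (if t = 0 then Q_val i else (X_val t k + X_val t i) mod 2))"

end

text \<open>\<open>Q_trans r a b\<close> is the probability that \<open>Q\<close> outputs \<open>a\<close> on \<open>\<^bold>Q\<close> from input \<open>b\<close> on \<open>\<^bold>Q\<close>
  and \<open>r\<close> on \<open>R\<^sub>j\<close>; the output on \<open>R\<^sub>j\<close> is summed out since \<open>R\<^sub>j\<close> is never touched again.\<close>

definition (in R1_circuit) "Q_trans r a b =
  (\<Sum>r'<2 ^ (w - 1). (cmod (Q $$ (a * 2 ^ (w - 1) + r', b * 2 ^ (w - 1) + r)))\<^sup>2)"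

lemma (in R1_circuit) two_pow_w: "(2::nat) ^ w = 2 * 2 ^ (w - 1)"
  using w1 by (cases w) auto

locale R1_block = R1_circuit +
  fixes j i :: nat
  assumes j1: "1 \<le> j" and jN: "j \<le> 2 * N" and i_less: "i < 2 ^ n"
begin

definition "Q_forced x = (if j = 1 then Q_val i else (X_val (j - 1) x + X_val (j - 1) i) mod 2)"
definition "in_R p \<longleftrightarrow> R_start j \<le> p \<and> p < R_start j + (w - 1)"
definition "top_bit s = (s::nat) div 2 ^ (w - 1) mod 2"
definition "QR_val x = Q_val x * 2 ^ (w - 1) + R_val j x"
definition "admissible = {k. k < 2 ^ n \<and> R_val j k = R_val j i \<and> Q_val k = Q_forced k}"
abbreviation "Xj \<equiv> X_pos w l j"
abbreviation "Xp \<equiv> X_pos w l (j - 1)"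
abbreviation "before_gates x \<equiv> cnot_preimage j (inc_preimage x)"

text \<open>
  By the column invariant, the \<open>j\<close>-th block reaches \<open>x\<close> only from \<open>prev x\<close>: undo the
  increment and the CNOT, and reset \<open>\<^bold>Q\<close> and \<open>R\<^sub>j\<close> to the values the invariant forces.
  Conversely \<open>after k s\<close> is the state reached from \<open>k\<close> when \<open>Q\<close> outputs \<open>s\<close> on \<open>(\<^bold>Q, R\<^sub>j)\<close>;
  the two maps are mutually inverse between \<open>{..<2^n}\<close> and \<open>admissible \<times> {..<2^w}\<close>.
\<close>

definition "prev x = nat_of_bits n (\<lambda>p. if p < l then qbit l p ((C_val x + 2 ^ l - Q_val x) mod 2 ^ l)
   else if p = l then Q_forced x else if in_R p then qbit n p i
   else if p = Xj then (X_val j x + Q_val x) mod 2 else qbit n p x)"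

definition "after k s = nat_of_bits n (\<lambda>p. if p < l then qbit l p ((C_val k + top_bit s) mod 2 ^ l)
   else if p = l then top_bit s else if in_R p then qbit (w - 1) (p - R_start j) (s mod 2 ^ (w - 1))
   else if p = Xj then (X_val j k + top_bit s) mod 2 else qbit n p k)"

lemma block_positions:
  "l < R_start j" "Xj = R_start j + (w - 1)" "Xj < n" "\<not> in_R Xj" "Xj \<noteq> l" "R_start j + w \<le> n"
  "in_R p \<Longrightarrow> l < p \<and> p < n"
  using R_start_bounds[OF j1 jN] w1 by (auto simp: X_pos_eq in_R_def)

lemma prev_X_position: "j \<noteq> 1 \<Longrightarrow> l < Xp \<and> Xp < R_start j \<and> Xp \<noteq> l \<and> \<not> in_R Xp \<and> Xp \<noteq> Xj"
proof -
  assume "j \<noteq> 1"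
  then have j2: "j \<ge> 2" using j1 by simp
  then have "R_start j = R_start (j - 1) + w" using R_start_Suc[of "j - 1"] by simp
  moreover have "l < R_start (j - 1)" using R_start_bounds[of "j - 1"] j2 jN by simp
  ultimately show ?thesis using w1 by (auto simp: X_pos_eq in_R_def)
qed

lemma Q_forced_less: "Q_forced x < 2"
  by (simp add: Q_forced_def Q_val_less)

lemma top_bit_less: "top_bit s < 2"
  by (simp add: top_bit_def)

lemma prev_less: "prev x < 2 ^ n"
  unfolding prev_def by (rule nat_of_bits_less) (auto simp: Q_forced_less)

lemma after_less: "after k s < 2 ^ n"
  unfolding after_def by (rule nat_of_bits_less) (auto simp: top_bit_less)

lemma QR_val_less: "QR_val x < 2 ^ w"
proof -
  have "Q_val x * 2 ^ (w - 1) + R_val j x < 2 * 2 ^ (w - 1)"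
    using Q_val_less[of x] R_val_less[of j x] by (auto dest: less_2_cases)
  then show ?thesis by (simp add: QR_val_def two_pow_w)
qed

lemma top_bit_QR_val: "top_bit (QR_val x) = Q_val x"
  and mod_QR_val: "QR_val x mod 2 ^ (w - 1) = R_val j x"
  using R_val_less[of j x] Q_val_less[of x] by (auto simp: top_bit_def QR_val_def)

lemma top_bit_eq_div: "s < 2 ^ w \<Longrightarrow> top_bit s = s div 2 ^ (w - 1)"
  using div_less_2[of s "2 ^ (w - 1)"] by (simp add: top_bit_def two_pow_w)

lemma qbit_prev: "p < n \<Longrightarrow> qbit n p (prev x) =
  (if p < l then qbit l p ((C_val x + 2 ^ l - Q_val x) mod 2 ^ l)
   else if p = l then Q_forced x else if in_R p then qbit n p i
   else if p = Xj then (X_val j x + Q_val x) mod 2 else qbit n p x)"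
  unfolding prev_def by (rule qbit_nat_of_bits) (auto simp: Q_forced_less)

lemma qbit_after: "p < n \<Longrightarrow> qbit n p (after k s) =
  (if p < l then qbit l p ((C_val k + top_bit s) mod 2 ^ l)
   else if p = l then top_bit s else if in_R p then qbit (w - 1) (p - R_start j) (s mod 2 ^ (w - 1))
   else if p = Xj then (X_val j k + top_bit s) mod 2 else qbit n p k)"
  unfolding after_def by (rule qbit_nat_of_bits) (auto simp: top_bit_less)

lemma qbit_before_gates: "p < n \<Longrightarrow> qbit n p (before_gates x) =
  (if p = Xj then (X_val j x + Q_val x) mod 2
   else if p < l then qbit l p ((C_val x + 2 ^ l - Q_val x) mod 2 ^ l) else qbit n p x)"
  using block_positions l_less_n
  by (auto simp: qbit_cnot_preimage qbit_inc_preimage X_val_def Q_val_def)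

lemma C_val_prev: "C_val (prev x) = (C_val x + 2 ^ l - Q_val x) mod 2 ^ l"
  using l_less_n by (subst C_val_eq_iff) (auto simp: qbit_prev)

lemma Q_val_prev: "Q_val (prev x) = Q_forced x"
  using l_less_n by (simp add: Q_val_def qbit_prev)

lemma R_val_prev: "R_val j (prev x) = R_val j i"
proof (subst R_val_eq_iff)
  show "R_val j i < 2 ^ (w - 1)" by (rule R_val_less)
  show "\<forall>t<w - 1. qbit n (R_start j + t) (prev x) = qbit (w - 1) t (R_val j i)"
    using block_positions w1 qbit_R_val[of _ j i] by (auto simp: qbit_prev in_R_def)
qed

lemma X_val_prev: "X_val j (prev x) = (X_val j x + Q_val x) mod 2"
  using block_positions by (simp add: X_val_def qbit_prev)

lemma X_val_before_prev: "j \<noteq> 1 \<Longrightarrow> X_val (j - 1) (prev x) = X_val (j - 1) x"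
  using prev_X_position block_positions by (simp add: X_val_def qbit_prev)

lemma Q_forced_prev: "Q_forced (prev x) = Q_forced x"
  using X_val_before_prev by (auto simp: Q_forced_def)

lemma C_val_after: "C_val (after k s) = (C_val k + top_bit s) mod 2 ^ l"
  using l_less_n by (subst C_val_eq_iff) (auto simp: qbit_after)

lemma Q_val_after: "Q_val (after k s) = top_bit s"
  using l_less_n by (simp add: Q_val_def qbit_after)

lemma R_val_after: "R_val j (after k s) = s mod 2 ^ (w - 1)"
proof (subst R_val_eq_iff)
  show "s mod 2 ^ (w - 1) < 2 ^ (w - 1)" by simp
  show "\<forall>t<w - 1. qbit n (R_start j + t) (after k s) = qbit (w - 1) t (s mod 2 ^ (w - 1))"
    using block_positions w1 by (auto simp: qbit_after in_R_def)
qed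

lemma X_val_after: "X_val j (after k s) = (X_val j k + top_bit s) mod 2"
  using block_positions by (simp add: X_val_def qbit_after)

lemma X_val_before_after: "j \<noteq> 1 \<Longrightarrow> X_val (j - 1) (after k s) = X_val (j - 1) k"
  using prev_X_position block_positions by (simp add: X_val_def qbit_after)

lemma Q_forced_after: "Q_forced (after k s) = Q_forced k"
  using X_val_before_after by (auto simp: Q_forced_def)

lemma Q_val_before_gates: "Q_val (before_gates x) = Q_val x"
  using block_positions l_less_n by (simp add: Q_val_def qbit_before_gates)

lemma R_val_before_gates: "R_val j (before_gates x) = R_val j x"
proof (subst R_val_eq_iff)
  show "R_val j x < 2 ^ (w - 1)" by (rule R_val_less)
  show "\<forall>t<w - 1. qbit n (R_start j + t) (before_gates x) = qbit (w - 1) t (R_val j x)"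
    using block_positions w1 qbit_R_val[of _ j x] by (auto simp: qbit_before_gates)
qed

lemma before_gates_agree_prev:
  "\<forall>p<n. p \<noteq> l \<and> \<not> in_R p \<longrightarrow> qbit n p (before_gates x) = qbit n p (prev x)"
  using block_positions by (auto simp: qbit_before_gates qbit_prev)

lemma after_prev:
  assumes x: "x < 2 ^ n"
  shows "after (prev x) (QR_val x) = x"
proof (rule basis_eqI[OF after_less x], intro allI impI)
  fix p assume p: "p < n"
  consider "p < l" | "p = l" | "in_R p" | "p = Xj" | "\<not> p < l \<and> p \<noteq> l \<and> \<not> in_R p \<and> p \<noteq> Xj"
    by blast
  then show "qbit n p (after (prev x) (QR_val x)) = qbit n p x"
  proof cases
    case 1
    have "(C_val (prev x) + Q_val x) mod 2 ^ l = C_val x"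
      unfolding C_val_prev using mod_sub_add_cancel[OF C_val_less, of "Q_val x"] Q_val_less[of x]
      by simp
    then show ?thesis using 1 p by (simp add: qbit_after top_bit_QR_val qbit_C_val)
  next
    case 3
    then have "p = R_start j + (p - R_start j)" "p - R_start j < w - 1" by (auto simp: in_R_def)
    then show ?thesis
      using 3 p qbit_R_val[of "p - R_start j" j x] mod_QR_val[of x] block_positions(7)[OF 3]
      by (auto simp: qbit_after)
  next
    case 4
    have "qbit n Xj (after (prev x) (QR_val x)) = (X_val j (prev x) + top_bit (QR_val x)) mod 2"
      using block_positions by (simp add: qbit_after)
    also have "\<dots> = X_val j x"
      unfolding X_val_prev top_bit_QR_val by (rule mod2_add_add_cancel[OF X_val_less Q_val_less])
    finally show ?thesis using 4 by (simp add: X_val_def)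
  qed (use p in \<open>auto simp: qbit_after qbit_prev top_bit_QR_val Q_val_def\<close>)
qed

lemma prev_admissible: "prev x \<in> admissible"
  by (simp add: admissible_def prev_less R_val_prev Q_val_prev Q_forced_prev)

lemma prev_after:
  assumes k: "k \<in> admissible" and s: "s < 2 ^ w"
  shows "prev (after k s) = k" "QR_val (after k s) = s"
proof -
  have k_less: "k < 2 ^ n" and R_k: "R_val j k = R_val j i" and Q_k: "Q_val k = Q_forced k"
    using k by (auto simp: admissible_def)
  have "qbit n p (prev (after k s)) = qbit n p k" if p: "p < n" for p
  proof -
    consider "p < l" | "p = l" | "in_R p" | "p = Xj" | "\<not> p < l \<and> p \<noteq> l \<and> \<not> in_R p \<and> p \<noteq> Xj"
      by blast
    then show ?thesis
    proof cases
      case 1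
      have "(C_val (after k s) + 2 ^ l - Q_val (after k s)) mod 2 ^ l = C_val k"
        unfolding C_val_after Q_val_after
        using mod_add_sub_cancel[OF C_val_less, of "top_bit s"] top_bit_less[of s] by simp
      then show ?thesis using 1 p by (simp add: qbit_prev qbit_C_val)
    next
      case 3
      then have "p = R_start j + (p - R_start j)" "p - R_start j < w - 1" by (auto simp: in_R_def)
      then show ?thesis
        using 3 p R_k qbit_R_val[of "p - R_start j" j i] qbit_R_val[of "p - R_start j" j k]
          block_positions(7)[OF 3]
        by (simp add: qbit_prev)
    next
      case 4
      have "qbit n Xj (prev (after k s)) = (X_val j (after k s) + Q_val (after k s)) mod 2"
        using block_positions by (simp add: qbit_prev)
      also have "\<dots> = X_val j k"
        unfolding X_val_after Q_val_after by (rule mod2_add_add_cancel[OF X_val_less top_bit_less])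
      finally show ?thesis using 4 by (simp add: X_val_def)
    qed (use p Q_k in \<open>auto simp: qbit_prev qbit_after Q_forced_after Q_val_def\<close>)
  qed
  then show "prev (after k s) = k" by (simp add: basis_eqI[OF prev_less k_less])
  show "QR_val (after k s) = s"
    unfolding QR_val_def Q_val_after R_val_after top_bit_eq_div[OF s] by (rule div_mult_mod_eq)
qed

lemma column_invariant_support:
  assumes inv: "column_invariant U (j - 1) i" and k: "k < 2 ^ n" and nz: "U $$ (k, i) \<noteq> 0"
  shows "\<forall>p. R_start j \<le> p \<and> p < n \<longrightarrow> qbit n p k = qbit n p i" and "k \<in> admissible"
proof -
  have "R_start (j - 1 + 1) = R_start j" using j1 by simp
  with inv k nz have agree: "\<forall>p. R_start j \<le> p \<and> p < n \<longrightarrow> qbit n p k = qbit n p i"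
    and Q_k: "Q_val k = (if j - 1 = 0 then Q_val i else (X_val (j - 1) k + X_val (j - 1) i) mod 2)"
    unfolding column_invariant_def by auto
  then show "\<forall>p. R_start j \<le> p \<and> p < n \<longrightarrow> qbit n p k = qbit n p i" by blast
  have "R_val j k = R_val j i"
  proof (subst R_val_eq_iff)
    show "R_val j i < 2 ^ (w - 1)" by (rule R_val_less)
    show "\<forall>t<w - 1. qbit n (R_start j + t) k = qbit (w - 1) t (R_val j i)"
      using agree block_positions(6) qbit_R_val[of _ j i] by auto
  qed
  moreover have "Q_val k = Q_forced k" using Q_k j1 by (auto simp: Q_forced_def)
  ultimately show "k \<in> admissible" using k by (simp add: admissible_def)
qed

lemma eq_prev_if_supported:
  assumes inv: "column_invariant U (j - 1) i" and k: "k < 2 ^ n" and nz: "U $$ (k, i) \<noteq> 0"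
    and agree: "\<forall>p<n. p \<noteq> l \<and> \<not> in_R p \<longrightarrow> qbit n p (before_gates x) = qbit n p k"
  shows "k = prev x"
proof (rule basis_eqI[OF k prev_less], intro allI impI)
  fix p assume p: "p < n"
  have k_agree: "\<forall>p. R_start j \<le> p \<and> p < n \<longrightarrow> qbit n p k = qbit n p i" and "k \<in> admissible"
    using column_invariant_support[OF inv k nz] by blast+
  then have Q_k: "Q_val k = Q_forced k" by (simp add: admissible_def)
  show "qbit n p k = qbit n p (prev x)"
  proof (cases "p = l")
    case True
    have "Q_forced k = Q_forced x"
    proof (cases "j = 1")
      case True
      then show ?thesis unfolding Q_forced_def by simp
    next
      case False
      then have "X_val (j - 1) k = X_val (j - 1) x"
        using agree prev_X_position[OF False] qbit_before_gates[of Xp x] block_positions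
        by (simp add: X_val_def)
      then show ?thesis unfolding Q_forced_def by simp
    qed
    then show ?thesis using True Q_k Q_val_prev[of x] by (simp add: Q_val_def)
  next
    case False
    then show ?thesis
      using k_agree agree before_gates_agree_prev[of x] p block_positions
      by (cases "in_R p") (auto simp: qbit_prev in_R_def)
  qed
qed

lemma index_R1_step_mult:
  assumes U: "U \<in> carrier_mat (2 ^ n) (2 ^ n)" and inv: "column_invariant U (j - 1) i"
    and x: "x < 2 ^ n"
  shows "(R1_step w N l Q j * U) $$ (x, i) =
     Q $$ (QR_val x, Q_forced x * 2 ^ (w - 1) + R_val j i) * U $$ (prev x, i)"
proof -
  define Ei where "Ei = embed n (l # [0..<l]) (C_inc l)"
  define Ec where "Ec = embed n [l, Xj] CNOT"
  define Eq where "Eq = embed n (l # R_reg w l j) Q"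
  have c: "Ei \<in> carrier_mat (2 ^ n) (2 ^ n)" "Ec \<in> carrier_mat (2 ^ n) (2 ^ n)"
    "Eq \<in> carrier_mat (2 ^ n) (2 ^ n)"
    by (simp_all add: Ei_def Ec_def Eq_def)
  have "R1_step w N l Q j = Ei * Ec * Eq"
    by (simp add: R1_step_def Ei_def Ec_def Eq_def n_def)
  then have "R1_step w N l Q j * U = Ei * Ec * (Eq * U)"
    using c U by (simp add: assoc_mult_mat[of _ "2 ^ n" "2 ^ n" _ "2 ^ n" _ "2 ^ n"])
  also have "\<dots> = Ei * (Ec * (Eq * U))"
    using c U by (simp add: assoc_mult_mat[of _ "2 ^ n" "2 ^ n" _ "2 ^ n" _ "2 ^ n"])
  finally have "R1_step w N l Q j * U = Ei * (Ec * (Eq * U))" .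
  then have "(R1_step w N l Q j * U) $$ (x, i) = (Ec * (Eq * U)) $$ (inc_preimage x, i)"
    by (simp only:) (rule index_mult_mat_unit_row[where d = "2 ^ n"],
      use c U x i_less inc_preimage_less index_embed_C_inc in \<open>auto simp: Ei_def\<close>)
  also have "\<dots> = (Eq * U) $$ (before_gates x, i)"
    by (rule index_mult_mat_unit_row[where d = "2 ^ n"])
      (use c U x i_less inc_preimage_less cnot_preimage_less index_embed_CNOT[OF j1 jN]
        in \<open>auto simp: Ec_def\<close>)
  also have "\<dots> = (\<Sum>k<2 ^ n. Eq $$ (before_gates x, k) * U $$ (k, i))"
    using c U i_less cnot_preimage_less by (intro index_mult_mat_square) auto
  also have "\<dots> = Eq $$ (before_gates x, prev x) * U $$ (prev x, i)"
  proof (rule sum_lessThan_single[OF prev_less])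
    fix k assume k: "k < 2 ^ n" "k \<noteq> prev x"
    have "Eq $$ (before_gates x, k) = 0 \<or> U $$ (k, i) = 0"
      using eq_prev_if_supported[OF inv k(1)] k index_embed_Q[OF cnot_preimage_less k(1), of j]
      by (auto simp: Eq_def in_R_def)
    then show "Eq $$ (before_gates x, k) * U $$ (k, i) = 0" by auto
  qed
  also have "Eq $$ (before_gates x, prev x) = Q $$ (QR_val x, Q_forced x * 2 ^ (w - 1) + R_val j i)"
    using index_embed_Q[OF cnot_preimage_less prev_less, of j] before_gates_agree_prev[of x]
    by (simp add: Eq_def in_R_def QR_val_def Q_val_before_gates R_val_before_gates Q_val_prev R_val_prev)
  finally show ?thesis .
qed

lemma column_invariant_R1_step:
  assumes U: "U \<in> carrier_mat (2 ^ n) (2 ^ n)" and inv: "column_invariant U (j - 1) i"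
  shows "column_invariant (R1_step w N l Q j * U) j i"
  unfolding column_invariant_def
proof (intro allI impI)
  fix x assume x: "x < 2 ^ n" and nz: "(R1_step w N l Q j * U) $$ (x, i) \<noteq> 0"
  then have "U $$ (prev x, i) \<noteq> 0" using index_R1_step_mult[OF U inv x] by auto
  then have prev_agree: "\<forall>p. R_start j \<le> p \<and> p < n \<longrightarrow> qbit n p (prev x) = qbit n p i"
    using column_invariant_support(1)[OF inv prev_less] by blast
  have Suc_start: "R_start (j + 1) = R_start j + w" using j1 R_start_Suc[of j] by simp
  have agree: "\<forall>p. R_start (j + 1) \<le> p \<and> p < n \<longrightarrow> qbit n p x = qbit n p i"
  proof (intro allI impI)
    fix p assume p: "R_start (j + 1) \<le> p \<and> p < n"
    then have "\<not> p < l" "p \<noteq> l" "\<not> in_R p" "p \<noteq> Xj"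
      using block_positions w1 Suc_start by (auto simp: in_R_def)
    then have "qbit n p (prev x) = qbit n p x" using p by (simp add: qbit_prev)
    then show "qbit n p x = qbit n p i" using prev_agree p Suc_start by auto
  qed
  have "X_val j (prev x) = X_val j i"
    using prev_agree block_positions(2,3) by (simp add: X_val_def)
  then have "(X_val j x + Q_val x) mod 2 = X_val j i" by (simp add: X_val_prev)
  then have "Q_val x = (X_val j x + X_val j i) mod 2"
    by (rule mod2_add_solve[OF Q_val_less X_val_less])
  then show "(\<forall>p. R_start (j + 1) \<le> p \<and> p < n \<longrightarrow> qbit n p x = qbit n p i) \<and>
      Q_val x = (if j = 0 then Q_val i else (X_val j x + X_val j i) mod 2)"
    using agree j1 by simp
qed

lemma weighted_column_norm_R1_step:
  fixes g :: "nat \<Rightarrow> nat \<Rightarrow> real"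
  assumes U: "U \<in> carrier_mat (2 ^ n) (2 ^ n)" and inv: "column_invariant U (j - 1) i"
  shows "(\<Sum>x<2 ^ n. (cmod ((R1_step w N l Q j * U) $$ (x, i)))\<^sup>2 * g (C_val x) (Q_val x)) =
    (\<Sum>k<2 ^ n. (cmod (U $$ (k, i)))\<^sup>2 *
       (\<Sum>a<2. Q_trans (R_val j i) a (Q_val k) * g ((C_val k + a) mod 2 ^ l) a))"
proof -
  define D where "D = (2::nat) ^ (w - 1)"
  define F where "F k s = (cmod (Q $$ (s, Q_forced k * D + R_val j i)))\<^sup>2 * (cmod (U $$ (k, i)))\<^sup>2 *
      g (C_val (after k s)) (Q_val (after k s))" for k s
  define G where "G k = (cmod (U $$ (k, i)))\<^sup>2 *
      (\<Sum>a<2. Q_trans (R_val j i) a (Q_val k) * g ((C_val k + a) mod 2 ^ l) a)" for k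
  have "(\<Sum>x<2 ^ n. (cmod ((R1_step w N l Q j * U) $$ (x, i)))\<^sup>2 * g (C_val x) (Q_val x)) =
        (\<Sum>x<2 ^ n. F (prev x) (QR_val x))"
    by (intro sum.cong refl)
      (simp add: index_R1_step_mult[OF U inv] F_def after_prev Q_forced_prev norm_mult
        power_mult_distrib D_def)
  also have "\<dots> = (\<Sum>(k, s)\<in>admissible \<times> {..<2 ^ w}. F k s)"
    by (rule sum.reindex_bij_witness[of _ "\<lambda>(k, s). after k s" "\<lambda>x. (prev x, QR_val x)"])
       (auto simp: after_prev prev_admissible prev_after QR_val_less after_less)
  also have "\<dots> = (\<Sum>k\<in>admissible. \<Sum>a<2. \<Sum>r<D. F k (a * D + r))"
    by (simp add: sum.cartesian_product[symmetric] two_pow_w sum_lessThan_mult_blocks D_def)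
  also have "\<dots> = (\<Sum>k\<in>admissible. G k)"
  proof (rule sum.cong[OF refl])
    fix k assume "k \<in> admissible"
    then have Q_k: "Q_forced k = Q_val k" by (simp add: admissible_def)
    have "top_bit (a * D + r) = a" if "a < 2" "r < D" for a r
      using that by (simp add: top_bit_def D_def)
    then have "(\<Sum>a<2. \<Sum>r<D. F k (a * D + r)) = (\<Sum>a<2. \<Sum>r<D. (cmod (U $$ (k, i)))\<^sup>2 *
        ((cmod (Q $$ (a * D + r, Q_val k * D + R_val j i)))\<^sup>2 * g ((C_val k + a) mod 2 ^ l) a))"
      by (intro sum.cong refl) (simp add: F_def C_val_after Q_val_after Q_k)
    then show "(\<Sum>a<2. \<Sum>r<D. F k (a * D + r)) = G k"
      by (simp add: G_def sum_distrib_left sum_distrib_right Q_trans_def D_def mult_ac)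
  qed
  also have "\<dots> = (\<Sum>k<2 ^ n. G k)"
    using column_invariant_support(2)[OF inv]
    by (intro sum.mono_neutral_left) (auto simp: admissible_def G_def)
  finally show ?thesis by (simp add: G_def)
qed

end

primrec compose_ops :: "(nat \<Rightarrow> (nat \<Rightarrow> nat \<Rightarrow> real) \<Rightarrow> (nat \<Rightarrow> nat \<Rightarrow> real)) \<Rightarrow> nat \<Rightarrow>
    (nat \<Rightarrow> nat \<Rightarrow> real) \<Rightarrow> (nat \<Rightarrow> nat \<Rightarrow> real)" where
  "compose_ops S 0 f = f"
| "compose_ops S (Suc t) f = compose_ops S t (S (Suc t) f)"

definition sum_linear :: "((nat \<Rightarrow> nat \<Rightarrow> real) \<Rightarrow> (nat \<Rightarrow> nat \<Rightarrow> real)) \<Rightarrow> bool" where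
  "sum_linear Op \<longleftrightarrow> (\<forall>(Y::nat set) F x. finite Y \<longrightarrow>
      Op (\<lambda>c b. \<Sum>y\<in>Y. x y * F y c b) = (\<lambda>c b. \<Sum>y\<in>Y. x y * Op (F y) c b))"

lemma sum_linear_compose_ops: "(\<And>j. sum_linear (S j)) \<Longrightarrow> sum_linear (compose_ops S t)"
proof (induction t)
  case 0 then show ?case by (simp add: sum_linear_def)
next
  case (Suc t)
  show ?case unfolding sum_linear_def
  proof (intro allI impI)
    fix Y :: "nat set" and F x assume Y: "finite Y"
    have "compose_ops S (Suc t) (\<lambda>c b. \<Sum>y\<in>Y. x y * F y c b) = compose_ops S t (\<lambda>c b. \<Sum>y\<in>Y. x y * S (Suc t) (F y) c b)"
      using Suc.prems[of "Suc t"] Y by (simp add: sum_linear_def)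
    also have "\<dots> = (\<lambda>c b. \<Sum>y\<in>Y. x y * compose_ops S t (S (Suc t) (F y)) c b)"
      using Suc.IH[OF Suc.prems] Y by (simp add: sum_linear_def)
    finally show "compose_ops S (Suc t) (\<lambda>c b. \<Sum>y\<in>Y. x y * F y c b) = (\<lambda>c b. \<Sum>y\<in>Y. x y * compose_ops S (Suc t) (F y) c b)"
      by simp
  qed
qed

lemma compose_ops_cong: "(\<And>j f. 1 \<le> j \<Longrightarrow> j \<le> t \<Longrightarrow> S j f = S' j f) \<Longrightarrow> compose_ops S t f = compose_ops S' t f"
  by (induction t arbitrary: f) auto

text \<open>
  \<open>chain_exp T t q g\<close> is the expectation of \<open>g k\<^sub>t b\<^sub>t\<close> for the Markov chain on bits that starts
  in \<open>b\<^sub>0 = q\<close> and moves from \<open>b\<close> to \<open>a\<close> with weight \<open>T a b\<close>, where \<open>k\<^sub>t = b\<^sub>1 + \<dots> + b\<^sub>t\<close>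
  counts the ones visited.
\<close>

primrec chain_exp :: "(nat \<Rightarrow> nat \<Rightarrow> real) \<Rightarrow> nat \<Rightarrow> nat \<Rightarrow> (nat \<Rightarrow> nat \<Rightarrow> real) \<Rightarrow> real" where
  "chain_exp T 0 q g = g 0 q"
| "chain_exp T (Suc t) q g = chain_exp T t q (\<lambda>k b. \<Sum>a<2. T a b * g (k + a) a)"

lemma chain_exp_linear: "chain_exp T t q (\<lambda>k b. x * g k b + y * g' k b) = x * chain_exp T t q g + y * chain_exp T t q g'"
proof (induction t arbitrary: g g')
  case 0 then show ?case by simp
next
  case (Suc t)
  have "chain_exp T (Suc t) q (\<lambda>k b. x * g k b + y * g' k b) =
     chain_exp T t q (\<lambda>k b. x * (\<Sum>a<2. T a b * g (k + a) a) + y * (\<Sum>a<2. T a b * g' (k + a) a))"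
    by (simp add: sum_distrib_left sum.distrib algebra_simps)
  then show ?case using Suc.IH by simp
qed

lemma chain_exp_sum: "finite Y \<Longrightarrow> chain_exp T t q (\<lambda>k b. \<Sum>y\<in>Y. F y k b) = (\<Sum>y\<in>Y. chain_exp T t q (F y))"
proof (induction Y rule: finite_induct)
  case empty
  have "chain_exp T t q (\<lambda>k b. 0 * (0::real) + 0 * 0) = 0" by (subst chain_exp_linear) simp
  then show ?case by simp
next
  case (insert y Y)
  have "chain_exp T t q (\<lambda>k b. \<Sum>y\<in>insert y Y. F y k b) = chain_exp T t q (\<lambda>k b. 1 * F y k b + 1 * (\<Sum>y\<in>Y. F y k b))"
    using insert by simp
  also have "\<dots> = chain_exp T t q (F y) + chain_exp T t q (\<lambda>k b. \<Sum>y\<in>Y. F y k b)" by (subst chain_exp_linear) simp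
  finally show ?case using insert by simp
qed

locale bit_chain =
  fixes T :: "nat \<Rightarrow> nat \<Rightarrow> real" and \<delta> :: real
  assumes T_nonneg: "\<And>a b. a < 2 \<Longrightarrow> b < 2 \<Longrightarrow> T a b \<ge> 0"
    and T_col_sum: "\<And>b. b < 2 \<Longrightarrow> (\<Sum>a<2. T a b) = 1"
    and T_drift: "\<And>b. b < 2 \<Longrightarrow> (\<Sum>a<2. T a b * (2 * real a - 1)) = \<delta> * (2 * real b - 1)"
    and delta_small: "\<bar>\<delta>\<bar> \<le> 1/4"
begin

lemma chain_exp_mono: "q < 2 \<Longrightarrow> (\<And>k b. b < 2 \<Longrightarrow> g k b \<le> g' k b) \<Longrightarrow> chain_exp T t q g \<le> chain_exp T t q g'"
proof (induction t arbitrary: g g')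
  case 0 then show ?case by simp
next
  case (Suc t)
  show ?case unfolding chain_exp.simps
  proof (rule Suc.IH[OF Suc.prems(1)])
    fix k b :: nat assume b: "b < 2"
    show "(\<Sum>a<2. T a b * g (k + a) a) \<le> (\<Sum>a<2. T a b * g' (k + a) a)"
      using Suc.prems(2) T_nonneg b by (intro sum_mono mult_left_mono) auto
  qed
qed

lemma chain_exp_cong: "q < 2 \<Longrightarrow> (\<And>k b. b < 2 \<Longrightarrow> g k b = g' k b) \<Longrightarrow> chain_exp T t q g = chain_exp T t q g'"
  by (rule antisym; rule chain_exp_mono) auto

lemma chain_exp_const: "q < 2 \<Longrightarrow> chain_exp T t q (\<lambda>k b. c) = c"
proof (induction t)
  case 0 then show ?case by simp
next
  case (Suc t)
  have "chain_exp T (Suc t) q (\<lambda>k b. c) = chain_exp T t q (\<lambda>k b. c)"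
    unfolding chain_exp.simps by (rule chain_exp_cong[OF Suc.prems]) (simp add: T_col_sum flip: sum_distrib_right)
  then show ?case using Suc by simp
qed

lemma chain_exp_abs_le_sqrt: assumes q: "q < 2"
  shows "chain_exp T t q (\<lambda>k b. \<bar>f k b\<bar>) \<le> sqrt (chain_exp T t q (\<lambda>k b. (f k b)\<^sup>2))"
proof -
  define m where "m = chain_exp T t q (\<lambda>k b. \<bar>f k b\<bar>)"
  define s where "s = chain_exp T t q (\<lambda>k b. (f k b)\<^sup>2)"
  have m0: "m \<ge> 0"
  proof -
    have "chain_exp T t q (\<lambda>k b. 0) \<le> chain_exp T t q (\<lambda>k b. \<bar>f k b\<bar>)" by (rule chain_exp_mono[OF q]) auto
    then show ?thesis using chain_exp_const[OF q, of t 0] by (simp add: m_def)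
  qed
  have "0 \<le> chain_exp T t q (\<lambda>k b. (\<bar>f k b\<bar> - m)\<^sup>2)"
  proof -
    have "chain_exp T t q (\<lambda>k b. 0) \<le> chain_exp T t q (\<lambda>k b. (\<bar>f k b\<bar> - m)\<^sup>2)" by (rule chain_exp_mono[OF q]) auto
    then show ?thesis using chain_exp_const[OF q, of t 0] by simp
  qed
  also have "chain_exp T t q (\<lambda>k b. (\<bar>f k b\<bar> - m)\<^sup>2) =
      chain_exp T t q (\<lambda>k b. 1 * (f k b)\<^sup>2 + (-2*m) * \<bar>f k b\<bar>) + m\<^sup>2"
  proof -
    have "chain_exp T t q (\<lambda>k b. (\<bar>f k b\<bar> - m)\<^sup>2) = chain_exp T t q (\<lambda>k b. 1 * (1 * (f k b)\<^sup>2 + (-2*m) * \<bar>f k b\<bar>) + m\<^sup>2 * 1)"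
      by (rule arg_cong[where f="chain_exp T t q"]) (auto simp: power2_eq_square algebra_simps intro!: ext)
    then show ?thesis by (subst (asm) chain_exp_linear) (simp add: chain_exp_const[OF q])
  qed
  also have "\<dots> = s - 2 * m * m + m\<^sup>2" by (subst chain_exp_linear) (simp add: s_def m_def)
  finally have "m\<^sup>2 \<le> s" by (simp add: power2_eq_square)
  then show ?thesis using m0 by (simp add: m_def s_def real_le_rsqrt)
qed

definition "corr q t = chain_exp T t q (\<lambda>k b. (2 * real b - 1) * (2 * real k - real t))"
definition "msq q t = chain_exp T t q (\<lambda>k b. (2 * real k - real t)\<^sup>2)"

lemma sign_square: "a < (2::nat) \<Longrightarrow> (2 * real a - 1)\<^sup>2 = 1"
  by (cases a) (auto simp: less_Suc_eq)

lemma corr_rec: "q < 2 \<Longrightarrow> corr q (Suc t) = \<delta> * corr q t + 1"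
proof -
  assume q: "q < 2"
  have "corr q (Suc t) = chain_exp T t q (\<lambda>k b. \<Sum>a<2. T a b * ((2 * real a - 1) * ((2 * real k - real t) + (2 * real a - 1))))"
    unfolding corr_def by (simp add: algebra_simps)
  also have "\<dots> = chain_exp T t q (\<lambda>k b. \<delta> * ((2 * real b - 1) * (2 * real k - real t)) + 1 * 1)"
  proof (rule chain_exp_cong[OF q])
    fix k b :: nat assume b: "b < 2"
    have "(\<Sum>a<2. T a b * ((2 * real a - 1) * ((2 * real k - real t) + (2 * real a - 1)))) =
        (2 * real k - real t) * (\<Sum>a<2. T a b * (2 * real a - 1)) + (\<Sum>a<2. T a b * (2 * real a - 1)\<^sup>2)"
      by (simp add: sum_distrib_left sum.distrib[symmetric] algebra_simps power2_eq_square)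
    also have "(\<Sum>a<2. T a b * (2 * real a - 1)\<^sup>2) = (\<Sum>a<2. T a b)"
      by (rule sum.cong) (auto simp: sign_square)
    also have "(2 * real k - real t) * (\<Sum>a<2. T a b * (2 * real a - 1)) + (\<Sum>a<2. T a b) =
        \<delta> * ((2 * real b - 1) * (2 * real k - real t)) + 1 * 1"
      unfolding T_drift[OF b] T_col_sum[OF b] by (simp add: algebra_simps)
    finally show "(\<Sum>a<2. T a b * ((2 * real a - 1) * ((2 * real k - real t) + (2 * real a - 1)))) =
        \<delta> * ((2 * real b - 1) * (2 * real k - real t)) + 1 * 1" .
  qed
  also have "\<dots> = \<delta> * corr q t + 1"
    by (subst chain_exp_linear) (simp add: chain_exp_const[OF q] corr_def)
  finally show ?thesis .
qed

lemma msq_rec: "q < 2 \<Longrightarrow> msq q (Suc t) = msq q t + 2 * \<delta> * corr q t + 1"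
proof -
  assume q: "q < 2"
  have "msq q (Suc t) = chain_exp T t q (\<lambda>k b. \<Sum>a<2. T a b * ((2 * real k - real t) + (2 * real a - 1))\<^sup>2)"
    unfolding msq_def by (simp add: algebra_simps)
  also have "\<dots> = chain_exp T t q (\<lambda>k b. 1 * (2 * real k - real t)\<^sup>2 + (2 * \<delta>) * ((2 * real b - 1) * (2 * real k - real t)) + 1)"
  proof (rule chain_exp_cong[OF q])
    fix k b :: nat assume b: "b < 2"
    have "(\<Sum>a<2. T a b * ((2 * real k - real t) + (2 * real a - 1))\<^sup>2) =
        (2 * real k - real t)\<^sup>2 * (\<Sum>a<2. T a b) + 2 * (2 * real k - real t) * (\<Sum>a<2. T a b * (2 * real a - 1))
        + (\<Sum>a<2. T a b * (2 * real a - 1)\<^sup>2)"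
      by (simp add: sum_distrib_left sum.distrib[symmetric] algebra_simps power2_eq_square)
    also have "(\<Sum>a<2. T a b * (2 * real a - 1)\<^sup>2) = (\<Sum>a<2. T a b)"
      by (rule sum.cong) (auto simp: sign_square)
    also have "(2 * real k - real t)\<^sup>2 * (\<Sum>a<2. T a b) + 2 * (2 * real k - real t) * (\<Sum>a<2. T a b * (2 * real a - 1))
        + (\<Sum>a<2. T a b) = 1 * (2 * real k - real t)\<^sup>2 + (2 * \<delta>) * ((2 * real b - 1) * (2 * real k - real t)) + 1"
      unfolding T_drift[OF b] T_col_sum[OF b] by (simp add: algebra_simps)
    finally show "(\<Sum>a<2. T a b * ((2 * real k - real t) + (2 * real a - 1))\<^sup>2) =
        1 * (2 * real k - real t)\<^sup>2 + (2 * \<delta>) * ((2 * real b - 1) * (2 * real k - real t)) + 1" .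
  qed
  also have "\<dots> = msq q t + 2 * \<delta> * corr q t + 1"
  proof -
    have "chain_exp T t q (\<lambda>k b. 1 * (2 * real k - real t)\<^sup>2 + (2 * \<delta>) * ((2 * real b - 1) * (2 * real k - real t)) + 1)
       = chain_exp T t q (\<lambda>k b. 1 * (1 * (2 * real k - real t)\<^sup>2 + (2 * \<delta>) * ((2 * real b - 1) * (2 * real k - real t))) + 1 * 1)"
      by simp
    also have "\<dots> = msq q t + 2 * \<delta> * corr q t + 1"
      by (simp only: chain_exp_linear chain_exp_const[OF q]) (simp add: corr_def msq_def)
    finally show ?thesis .
  qed
  finally show ?thesis .
qed

lemma chain_moments: "q < 2 \<Longrightarrow> \<bar>corr q t\<bar> \<le> 4/3 \<and> msq q t \<le> 5/3 * real t"
proof (induction t)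
  case 0 then show ?case by (simp add: corr_def msq_def)
next
  case (Suc t)
  have h: "\<bar>corr q t\<bar> \<le> 4/3" "msq q t \<le> 5/3 * real t" using Suc by auto
  have p: "\<bar>\<delta> * corr q t\<bar> \<le> 1/3"
  proof -
    have "\<bar>\<delta> * corr q t\<bar> = \<bar>\<delta>\<bar> * \<bar>corr q t\<bar>" by (simp add: abs_mult)
    also have "\<dots> \<le> 1/4 * (4/3)" using delta_small h(1) by (intro mult_mono) auto
    finally show ?thesis by simp
  qed
  have "\<bar>corr q (Suc t)\<bar> \<le> 4/3" using corr_rec[OF Suc.prems] p by simp
  moreover have "msq q (Suc t) \<le> 5/3 * real (Suc t)" using msq_rec[OF Suc.prems] p h(2) by (simp add: abs_le_iff)
  ultimately show ?case by simp
qed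

lemma chain_exp_dist_le:
  assumes q: "q < 2"
  shows "chain_exp T (2 * N) q (\<lambda>k b. \<bar>real k - real N\<bar>) \<le> sqrt (5 * real N / 6)"
proof -
  have "chain_exp T (2 * N) q (\<lambda>k b. (real k - real N)\<^sup>2) =
      chain_exp T (2 * N) q (\<lambda>k b. 1/4 * (2 * real k - real (2 * N))\<^sup>2 + 0 * 0)"
    by (rule arg_cong[where f = "chain_exp T (2 * N) q"]) (auto simp: power2_eq_square algebra_simps)
  also have "\<dots> = 1/4 * msq q (2 * N)"
    by (simp only: chain_exp_linear) (simp add: msq_def)
  also have "\<dots> \<le> 5 * real N / 6"
    using chain_moments[OF q, of "2 * N"] by simp
  finally have "chain_exp T (2 * N) q (\<lambda>k b. (real k - real N)\<^sup>2) \<le> 5 * real N / 6" .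
  then show ?thesis
    using chain_exp_abs_le_sqrt[OF q, of "2 * N" "\<lambda>k b. real k - real N"] real_sqrt_le_mono
    by (blast intro: order_trans)
qed

end

lemma sum_shifted_below_le_dist:
  fixes N k :: nat assumes N: "N \<ge> 1"
  shows "(\<Sum>c<N. (if (c + k) mod (2*N) < N then 1 else 0 :: real)) \<le> \<bar>real k - real N\<bar>"
proof -
  have eq: "(\<Sum>c<N. (if (c + k) mod (2*N) < N then 1 else 0 :: real)) = real (card {c. c < N \<and> (c + k) mod (2*N) < N})"
    by (simp add: sum.If_cases Int_def)
  consider "k < N" | "N \<le> k \<and> k < 2*N" | "2*N \<le> k" by linarith
  then show ?thesis
  proof cases
    case 1
    have "{c. c < N \<and> (c + k) mod (2*N) < N} = {..<N - k}"
    proof -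
      have "\<And>c. c < N \<Longrightarrow> (c + k) mod (2*N) = c + k" using 1 by simp
      then show ?thesis using 1 by auto
    qed
    then show ?thesis unfolding eq using 1 by simp
  next
    case 2
    have "{c. c < N \<and> (c + k) mod (2*N) < N} = {2*N - k..<N}"
    proof -
      have "\<And>c. c < N \<Longrightarrow> (c + k) mod (2*N) = (if c + k < 2*N then c + k else c + k - 2*N)"
        using 2 by (auto simp: mod_if)
      then show ?thesis using 2 by (auto split: if_splits)
    qed
    then show ?thesis unfolding eq using 2 by simp
  next
    case 3
    have "card {c. c < N \<and> (c + k) mod (2*N) < N} \<le> card {..<N}" by (rule card_mono) auto
    then show ?thesis unfolding eq using 3 by simp
  qed
qed

lemma sqrt_bound_lt_powr: "(x::real) \<ge> 1 \<Longrightarrow> sqrt (5 * x / 6) / x < x powr (-1/3)"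
proof -
  assume x: "x \<ge> 1"
  define y where "y = x powr (1/3)"
  have y1: "y \<ge> 1" using x by (simp add: y_def ge_one_powr_ge_zero)
  have y3: "y ^ 3 = x" using x by (simp add: y_def powr_realpow[symmetric] powr_powr)
  have xm: "x powr (-1/3) = 1 / y" using x by (simp add: y_def powr_minus_divide)
  have "5 * y\<^sup>2 < 6 * y ^ 3" using y1 by (simp add: power2_eq_square power3_eq_cube mult_strict_right_mono)
  then have a: "5 * (y * y) < 6 * x" using y3 by (simp add: power2_eq_square power3_eq_cube)
  have b: "x * (5 * (y * y)) < x * (6 * x)" using a x by (intro mult_strict_left_mono) auto
  have "5 * x / 6 < (x / y)\<^sup>2" using b y1 by (simp add: power2_eq_square field_simps)
  then have "sqrt (5 * x / 6) < sqrt ((x / y)\<^sup>2)" by (rule real_sqrt_less_mono)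
  then have "sqrt (5 * x / 6) < x / y" using y1 x by simp
  then show ?thesis using xm x by (simp add: field_simps)
qed

context R1_circuit begin

definition "step_op r f = (\<lambda>c b. \<Sum>a<2. Q_trans r a b * f ((c + a) mod 2 ^ l) a)"

lemma sum_linear_step_op: "sum_linear (step_op r)"
  unfolding sum_linear_def step_op_def
  by (auto simp: sum_distrib_left sum_distrib_right mult.commute mult.left_commute intro!: ext sum.swap)

lemma R1_step_carrier: "R1_step w N l Q j \<in> carrier_mat (2 ^ n) (2 ^ n)"
  unfolding R1_step_def n_def[symmetric] by (intro mult_carrier_mat[of _ "2 ^ n" "2 ^ n" _ "2 ^ n"] embed_carrier)

lemma R1_upto_carrier: "R1_upto w N l Q t \<in> carrier_mat (2 ^ n) (2 ^ n)"
proof (induction t)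
  case 0 then show ?case by (simp add: n_def[symmetric])
next
  case (Suc t) then show ?case using mult_carrier_mat[OF R1_step_carrier Suc.IH] by simp
qed

lemma column_invariant_R1_upto:
  assumes "t \<le> 2 * N" "i < 2 ^ n"
  shows "column_invariant (R1_upto w N l Q t) t i"
  using assms(1)
proof (induction t)
  case 0
  then show ?case
    using assms(2) by (auto simp: column_invariant_def n_def index_one_mat split: if_splits)
next
  case (Suc t)
  interpret R1_block w N l Q "Suc t" i
    by unfold_locales (use w1 Q_carrier two_pow_l l1 Suc.prems assms(2) in auto)
  show ?case
    using column_invariant_R1_step[OF R1_upto_carrier, of t] Suc by simp
qed

lemma column_norm_R1_upto:
  assumes "t \<le> 2 * N" "i < 2 ^ n"
  shows "(\<Sum>x<2 ^ n. (cmod (R1_upto w N l Q t $$ (x, i)))\<^sup>2 * g (C_val x) (Q_val x)) =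
    compose_ops (\<lambda>j. step_op (R_val j i)) t g (C_val i) (Q_val i)"
  using assms(1)
proof (induction t arbitrary: g)
  case 0
  have "(\<Sum>x<2 ^ n. (cmod (R1_upto w N l Q 0 $$ (x, i)))\<^sup>2 * g (C_val x) (Q_val x)) =
      (cmod (R1_upto w N l Q 0 $$ (i, i)))\<^sup>2 * g (C_val i) (Q_val i)"
    by (rule sum_lessThan_single) (use assms(2) in \<open>auto simp: n_def[symmetric]\<close>)
  then show ?case using assms(2) by (simp add: n_def[symmetric])
next
  case (Suc t)
  interpret R1_block w N l Q "Suc t" i
    by unfold_locales (use w1 Q_carrier two_pow_l l1 Suc.prems assms(2) in auto)
  have "column_invariant (R1_upto w N l Q t) (Suc t - 1) i"
    using column_invariant_R1_upto[OF _ assms(2), of t] Suc.prems by simp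
  then have "(\<Sum>x<2 ^ n. (cmod (R1_upto w N l Q (Suc t) $$ (x, i)))\<^sup>2 * g (C_val x) (Q_val x)) =
      (\<Sum>k<2 ^ n. (cmod (R1_upto w N l Q t $$ (k, i)))\<^sup>2 *
        step_op (R_val (Suc t) i) g (C_val k) (Q_val k))"
    by (simp add: weighted_column_norm_R1_step[OF R1_upto_carrier] step_op_def)
  then show ?case using Suc by simp
qed

definition "set_R J r i = nat_of_bits n (\<lambda>p. if R_start J \<le> p \<and> p < R_start J + (w - 1) then qbit (w - 1) (p - R_start J) r else qbit n p i)"

lemma set_R_less: "set_R J r i < 2 ^ n"
  unfolding set_R_def by (rule nat_of_bits_less) auto

lemma qbit_set_R: "p < n \<Longrightarrow> qbit n p (set_R J r i) =
  (if R_start J \<le> p \<and> p < R_start J + (w - 1) then qbit (w - 1) (p - R_start J) r else qbit n p i)"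
  unfolding set_R_def by (rule qbit_nat_of_bits) auto

lemma C_val_set_R: "1 \<le> J \<Longrightarrow> C_val (set_R J r i) = C_val i"
  using l_less_R_start[of J] l_less_n by (subst C_val_eq_iff) (auto simp: C_val_less qbit_set_R qbit_C_val)

lemma Q_val_set_R: "1 \<le> J \<Longrightarrow> Q_val (set_R J r i) = Q_val i"
  using l_less_R_start[of J] l_less_n by (simp add: Q_val_def qbit_set_R)

lemma q0_set_R: "1 \<le> J \<Longrightarrow> qbit n 0 (set_R J r i) = qbit n 0 i"
  using l_less_R_start[of J] l_less_n by (simp add: qbit_set_R)

lemma R_val_set_R: "1 \<le> J \<Longrightarrow> J \<le> 2 * N \<Longrightarrow> r < 2 ^ (w - 1) \<Longrightarrow> R_val J (set_R J r i) = r"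
  using R_start_bounds[of J] by (subst R_val_eq_iff) (auto simp: qbit_set_R)

lemma R_val_set_R_other: "1 \<le> j \<Longrightarrow> j < J \<Longrightarrow> J \<le> 2 * N \<Longrightarrow> R_val j (set_R J r i) = R_val j i"
proof (subst R_val_eq_iff)
  assume a: "1 \<le> j" "j < J" "J \<le> 2 * N"
  show "R_val j i < 2 ^ (w - 1)" by (rule R_val_less)
  show "\<forall>t<w - 1. qbit n (R_start j + t) (set_R J r i) = qbit (w - 1) t (R_val j i)"
    using R_start_mono[OF a(1,2)] R_start_bounds[of J] a qbit_R_val[of _ j i] by (auto simp: qbit_set_R)
qed

lemma set_R_set_R: "set_R J r (set_R J r' k) = set_R J r k"
  by (rule basis_eqI[OF set_R_less set_R_less]) (simp add: qbit_set_R)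

lemma set_R_R_val: "1 \<le> J \<Longrightarrow> J \<le> 2 * N \<Longrightarrow> i < 2 ^ n \<Longrightarrow> set_R J (R_val J i) i = i"
proof (rule basis_eqI[OF set_R_less])
  assume a: "1 \<le> J" "J \<le> 2 * N" "i < 2 ^ n"
  show "i < 2 ^ n" by (rule a(3))
  show "\<forall>p<n. qbit n p (set_R J (R_val J i) i) = qbit n p i"
  proof (intro allI impI)
    fix p assume p: "p < n"
    show "qbit n p (set_R J (R_val J i) i) = qbit n p i"
    proof (cases "R_start J \<le> p \<and> p < R_start J + (w - 1)")
      case True
      then have "p = R_start J + (p - R_start J)" "p - R_start J < w - 1" by auto
      then show ?thesis using True p qbit_R_val[of "p - R_start J" J i] by (simp add: qbit_set_R)
    next
      case False then show ?thesis using p by (auto simp: qbit_set_R)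
    qed
  qed
qed

lemma sum_half_split_R:
  fixes H :: "nat \<Rightarrow> real"
  assumes J: "1 \<le> J" "J \<le> 2 * N"
  shows "(\<Sum>i<2 ^ (n - 1). H i) = (\<Sum>k\<in>{i. i < 2 ^ (n - 1) \<and> R_val J i = 0}. \<Sum>r<2 ^ (w - 1). H (set_R J r k))"
proof -
  have nn: "(2::nat) ^ (n - 1) \<le> 2 ^ n" by simp
  have inA: "\<And>r k. k < 2 ^ (n - 1) \<Longrightarrow> set_R J r k < 2 ^ (n - 1)"
  proof -
    fix r k assume k: "k < (2::nat) ^ (n - 1)"
    then have "k < 2 ^ n" using nn by linarith
    then have "qbit n 0 k = 0" using k qbit_0_eq_0_iff[OF n_ge1] by blast
    then have "qbit n 0 (set_R J r k) = 0" using q0_set_R[OF J(1)] by simp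
    then show "set_R J r k < 2 ^ (n - 1)" using qbit_0_eq_0_iff[OF n_ge1 set_R_less] by blast
  qed
  have "(\<Sum>i<2 ^ (n - 1). H i) = (\<Sum>(k,r)\<in>{i. i < 2 ^ (n - 1) \<and> R_val J i = 0} \<times> {..<2 ^ (w - 1)}. H (set_R J r k))"
  proof (rule sum.reindex_bij_witness[of _ "\<lambda>(k,r). set_R J r k" "\<lambda>i. (set_R J 0 i, R_val J i)"])
    fix i assume i: "i \<in> {..<(2::nat) ^ (n - 1)}"
    then have i': "i < 2 ^ n" using nn by (meson lessThan_iff less_le_trans)
    show "(case (set_R J 0 i, R_val J i) of (k, r) \<Rightarrow> set_R J r k) = i"
      using set_R_set_R set_R_R_val[OF J i'] by simp
    show "(set_R J 0 i, R_val J i) \<in> {i. i < 2 ^ (n - 1) \<and> R_val J i = 0} \<times> {..<2 ^ (w - 1)}"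
      using i inA R_val_set_R[OF J, of 0] R_val_less by auto
    show "(case (set_R J 0 i, R_val J i) of (k, r) \<Rightarrow> H (set_R J r k)) = H i"
      using set_R_set_R set_R_R_val[OF J i'] by simp
  next
    fix b assume b: "b \<in> {i. i < 2 ^ (n - 1) \<and> R_val J i = 0} \<times> {..<(2::nat) ^ (w - 1)}"
    then obtain k r where kr: "b = (k,r)" "k < 2 ^ (n - 1)" "R_val J k = 0" "r < 2 ^ (w - 1)" by auto
    have k': "k < 2 ^ n" using kr nn by linarith
    have "set_R J 0 (set_R J r k) = k" using set_R_set_R set_R_R_val[OF J k'] kr by simp
    then show "(set_R J 0 (case b of (k, r) \<Rightarrow> set_R J r k), R_val J (case b of (k, r) \<Rightarrow> set_R J r k)) = b"
      using kr R_val_set_R[OF J] by simp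
    show "(case b of (k, r) \<Rightarrow> set_R J r k) \<in> {..<2 ^ (n - 1)}" using kr inA by simp
  qed
  also have "\<dots> = (\<Sum>k\<in>{i. i < 2 ^ (n - 1) \<and> R_val J i = 0}. \<Sum>r<2 ^ (w - 1). H (set_R J r k))"
    by (rule sum.cartesian_product[symmetric])
  finally show ?thesis .
qed

lemma sum_half_average_R:
  fixes G :: "nat \<Rightarrow> real"
  assumes J: "1 \<le> J" "J \<le> 2 * N"
  shows "(\<Sum>i<2 ^ (n - 1). G i) = (\<Sum>r<2 ^ (w - 1). \<Sum>i<2 ^ (n - 1). G (set_R J r i)) / 2 ^ (w - 1)"
proof -
  define A0 where "A0 = {i. i < 2 ^ (n - 1) \<and> R_val J i = 0}"
  have "(\<Sum>r<2 ^ (w - 1). \<Sum>i<2 ^ (n - 1). G (set_R J r i)) = (\<Sum>r'<2 ^ (w - 1). \<Sum>k\<in>A0. \<Sum>r<2 ^ (w - 1). G (set_R J r' (set_R J r k)))"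
    using sum_half_split_R[OF J] unfolding A0_def by simp
  also have "\<dots> = (\<Sum>r'<2 ^ (w - 1). \<Sum>k\<in>A0. 2 ^ (w - 1) * G (set_R J r' k))"
    by (simp add: set_R_set_R)
  also have "\<dots> = (\<Sum>k\<in>A0. \<Sum>r'<2 ^ (w - 1). 2 ^ (w - 1) * G (set_R J r' k))"
    by (rule sum.swap)
  also have "\<dots> = 2 ^ (w - 1) * (\<Sum>k\<in>A0. \<Sum>r'<2 ^ (w - 1). G (set_R J r' k))"
    by (simp add: sum_distrib_left)
  also have "\<dots> = 2 ^ (w - 1) * (\<Sum>i<2 ^ (n - 1). G i)"
    using sum_half_split_R[OF J, of G] unfolding A0_def by simp
  finally show ?thesis by simp
qed

definition "avg_trans a b = (\<Sum>r<2 ^ (w - 1). Q_trans r a b) / 2 ^ (w - 1)"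
definition "avg_step_op f = (\<lambda>c b. \<Sum>a<2. avg_trans a b * f ((c + a) mod 2 ^ l) a)"

lemma avg_step_op_avg: "avg_step_op f = (\<lambda>c b. \<Sum>r<2 ^ (w - 1). (1/2 ^ (w - 1)) * step_op r f c b)"
proof (intro ext)
  fix c b
  have "(\<Sum>r<2 ^ (w - 1). (1/2 ^ (w - 1)) * step_op r f c b) =
      (\<Sum>r<2 ^ (w - 1). \<Sum>a<2. (1/2 ^ (w - 1)) * (Q_trans r a b * f ((c + a) mod 2 ^ l) a))"
    by (simp add: step_op_def sum_distrib_left)
  also have "\<dots> = (\<Sum>a<2. \<Sum>r<2 ^ (w - 1). (1/2 ^ (w - 1)) * (Q_trans r a b * f ((c + a) mod 2 ^ l) a))"
    by (rule sum.swap)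
  also have "\<dots> = avg_step_op f c b"
    by (simp add: avg_step_op_def avg_trans_def sum_distrib_left sum_distrib_right sum_divide_distrib)
  finally show "avg_step_op f c b = (\<Sum>r<2 ^ (w - 1). (1/2 ^ (w - 1)) * step_op r f c b)" by simp
qed

lemma less_half_imp_less: "i < 2 ^ (n - 1) \<Longrightarrow> i < (2::nat) ^ n"
  by (meson less_le_trans one_le_numeral power_increasing diff_le_self)

text \<open>Averaging over the contents of \<open>R\<^sub>J\<close> replaces the weights \<open>Q_trans\<close> of the \<open>J\<close>-th
  block by \<open>avg_trans\<close>; earlier blocks do not read \<open>R\<^sub>J\<close>.\<close>

lemma average_over_R_block:
  assumes "Suc t \<le> 2 * N"
  shows "(\<Sum>i<2 ^ (n - 1). compose_ops (\<lambda>j. step_op (R_val j i)) t (step_op (R_val (Suc t) i) h)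
            (C_val i) (Q_val i)) =
         (\<Sum>i<2 ^ (n - 1). compose_ops (\<lambda>j. step_op (R_val j i)) t (avg_step_op h) (C_val i) (Q_val i))"
proof -
  define J where "J = Suc t"
  define Om where "Om i f = compose_ops (\<lambda>j. step_op (R_val j i)) t f (C_val i) (Q_val i)" for i f
  have J: "1 \<le> J" "J \<le> 2 * N" using assms by (auto simp: J_def)
  have "(\<Sum>i<2 ^ (n - 1). Om i (step_op (R_val J i) h)) =
      (\<Sum>r<2 ^ (w - 1). \<Sum>i<2 ^ (n - 1). Om (set_R J r i) (step_op (R_val J (set_R J r i)) h)) / 2 ^ (w - 1)"
    by (rule sum_half_average_R[OF J])
  also have "\<dots> = (\<Sum>r<2 ^ (w - 1). \<Sum>i<2 ^ (n - 1). Om i (step_op r h)) / 2 ^ (w - 1)"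
  proof -
    have "Om (set_R J r i) (step_op (R_val J (set_R J r i)) h) = Om i (step_op r h)"
      if r: "r < 2 ^ (w - 1)" for r i
    proof -
      have "compose_ops (\<lambda>j. step_op (R_val j (set_R J r i))) t (step_op r h) =
          compose_ops (\<lambda>j. step_op (R_val j i)) t (step_op r h)"
        by (rule compose_ops_cong) (use R_val_set_R_other J in \<open>auto simp: J_def\<close>)
      then show ?thesis
        unfolding Om_def R_val_set_R[OF J r] C_val_set_R[OF J(1)] Q_val_set_R[OF J(1)] by simp
    qed
    then show ?thesis by (auto intro!: sum.cong)
  qed
  also have "\<dots> = (\<Sum>i<2 ^ (n - 1). \<Sum>r<2 ^ (w - 1). (1 / 2 ^ (w - 1)) * Om i (step_op r h))"
    by (subst sum.swap) (simp add: sum_divide_distrib sum_distrib_left)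
  also have "\<dots> = (\<Sum>i<2 ^ (n - 1). Om i (avg_step_op h))"
  proof (rule sum.cong[OF refl])
    fix i
    have lin: "sum_linear (compose_ops (\<lambda>j. step_op (R_val j i)) t)"
      by (rule sum_linear_compose_ops) (rule sum_linear_step_op)
    have "compose_ops (\<lambda>j. step_op (R_val j i)) t
        (\<lambda>c b. \<Sum>r<2 ^ (w - 1). (1 / 2 ^ (w - 1)) * step_op r h c b) =
        (\<lambda>c b. \<Sum>r<2 ^ (w - 1). (1 / 2 ^ (w - 1)) * compose_ops (\<lambda>j. step_op (R_val j i)) t (step_op r h) c b)"
      using lin[unfolded sum_linear_def, rule_format,
          of "{..<2 ^ (w - 1)}" "\<lambda>_. 1 / 2 ^ (w - 1)" "\<lambda>r. step_op r h"]
      by simp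
    then show "(\<Sum>r<2 ^ (w - 1). (1 / 2 ^ (w - 1)) * Om i (step_op r h)) = Om i (avg_step_op h)"
      unfolding Om_def avg_step_op_avg by simp
  qed
  finally show ?thesis by (simp add: Om_def J_def)
qed

lemma average_column_norm:
  assumes "t \<le> 2 * N"
  shows "(\<Sum>i<2 ^ (n - 1). \<Sum>x<2 ^ n. (cmod (R1_upto w N l Q t $$ (x, i)))\<^sup>2 * h (C_val x) (Q_val x)) =
         (\<Sum>i<2 ^ (n - 1). compose_ops (\<lambda>_. avg_step_op) t h (C_val i) (Q_val i))"
  using assms
proof (induction t arbitrary: h)
  case 0
  show ?case using column_norm_R1_upto[of 0] less_half_imp_less by (intro sum.cong) auto
next
  case (Suc t)
  have "(\<Sum>i<2 ^ (n - 1). \<Sum>x<2 ^ n. (cmod (R1_upto w N l Q (Suc t) $$ (x, i)))\<^sup>2 * h (C_val x) (Q_val x)) =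
      (\<Sum>i<2 ^ (n - 1). compose_ops (\<lambda>j. step_op (R_val j i)) t (step_op (R_val (Suc t) i) h)
        (C_val i) (Q_val i))"
    using column_norm_R1_upto[OF Suc.prems] less_half_imp_less by (intro sum.cong) auto
  also have "\<dots> = (\<Sum>i<2 ^ (n - 1). compose_ops (\<lambda>j. step_op (R_val j i)) t (avg_step_op h)
      (C_val i) (Q_val i))"
    using Suc.prems by (intro average_over_R_block) auto
  also have "\<dots> = (\<Sum>i<2 ^ (n - 1). \<Sum>x<2 ^ n. (cmod (R1_upto w N l Q t $$ (x, i)))\<^sup>2 *
      avg_step_op h (C_val x) (Q_val x))"
    using column_norm_R1_upto[of t] Suc.prems less_half_imp_less by (intro sum.cong) auto
  also have "\<dots> = (\<Sum>i<2 ^ (n - 1). compose_ops (\<lambda>_. avg_step_op) t (avg_step_op h) (C_val i) (Q_val i))"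
    using Suc by simp
  finally show ?case by simp
qed

lemma C_val_eq_div: "i < 2 ^ n \<Longrightarrow> C_val i = i div 2 ^ (n - l)"
proof -
  assume i: "i < 2 ^ n"
  have nl: "n - l + l = n" using l_less_n by simp
  have lt: "i div 2 ^ (n - l) < 2 ^ l" using i nl
    by (metis less_mult_imp_div_less power_add mult.commute)
  show ?thesis
  proof (subst C_val_eq_iff[OF lt], intro allI impI)
    fix p assume p: "p < l"
    have "n - 1 - p = (n - l) + (l - 1 - p)" using p l_less_n by simp
    then show "qbit n p i = qbit l p (i div 2 ^ (n - l))"
      by (simp add: qbit_def power_add div_mult2_eq)
  qed
qed

lemma sum_half_by_counter:
  fixes h :: "nat \<Rightarrow> nat \<Rightarrow> real"
  shows "(\<Sum>i<2 ^ (n - 1). h (C_val i) (Q_val i)) = 2 ^ (n - l - 1) * (\<Sum>c<N. \<Sum>q<2. h c q)"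
proof -
  define E where "E = (2::nat) ^ (n - l - 1)"
  have nl: "n - l = Suc (n - l - 1)" using l_less_n by simp
  have e1: "(2::nat) ^ (n - 1) = (N*2) * E"
  proof -
    have "n - 1 = l + (n - l - 1)" using l_less_n l1 by simp
    then show ?thesis unfolding E_def using two_pow_l by (simp add: power_add)
  qed
  have e2: "(2::nat) ^ (n - l) = E * 2" unfolding E_def using nl by (metis power_Suc mult.commute)
  have "(\<Sum>i<2 ^ (n - 1). h (C_val i) (Q_val i)) = (\<Sum>i<(N*2)*E. h (i div E div 2) (i div E mod 2))"
  proof (rule sum.cong)
    show "{..<2 ^ (n - 1)} = {..<(N*2)*E}" using e1 by simp
    fix i assume "i \<in> {..<(N*2)*E}"
    then have "i < 2 ^ n" using e1 less_half_imp_less by simp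
    then show "h (C_val i) (Q_val i) = h (i div E div 2) (i div E mod 2)"
      unfolding C_val_eq_div[OF \<open>i < 2 ^ n\<close>] e2 Q_val_def qbit_def E_def by (simp add: div_mult2_eq)
  qed
  also have "\<dots> = (\<Sum>u<N*2. \<Sum>q<E. h ((u*E + q) div E div 2) ((u*E + q) div E mod 2))"
    by (rule sum_lessThan_mult_blocks)
  also have "\<dots> = (\<Sum>u<N*2. real E * h (u div 2) (u mod 2))"
    by (intro sum.cong refl) (simp add: E_def)
  also have "\<dots> = real E * (\<Sum>c<N. \<Sum>q<2. h ((c*2+q) div 2) ((c*2+q) mod 2))"
    by (simp add: sum_distrib_left sum_lessThan_mult_blocks)
  also have "\<dots> = real E * (\<Sum>c<N. \<Sum>q<2. h c q)"
    by (intro arg_cong[where f="\<lambda>x. real E * x"] sum.cong refl) auto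
  finally show ?thesis by (simp add: E_def)
qed

lemma avg_trans_nonneg: "avg_trans a b \<ge> 0" by (simp add: avg_trans_def Q_trans_def sum_nonneg)

lemma avg_trans_colsum: assumes U: "unitary_mat Q" and b: "b < 2"
  shows "(\<Sum>a<2. avg_trans a b) = 1"
proof -
  define D where "D = (2::nat) ^ (w - 1)"
  have "\<And>r. r < D \<Longrightarrow> (\<Sum>a<2. Q_trans r a b) = 1"
  proof -
    fix r assume r: "r < D"
    have "(\<Sum>a<2. Q_trans r a b) = (\<Sum>x<2*D. (cmod (Q $$ (x, b * D + r)))\<^sup>2)"
      by (simp add: Q_trans_def sum_lessThan_mult_blocks D_def)
    also have "\<dots> = 1"
    proof -
      have "b * D + r < 2 * D" using b r by (cases "b = 0") (auto dest: less_2_cases)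
      then show ?thesis using unitary_col_norm[OF Q_carrier U] two_pow_w by (simp add: D_def)
    qed
    finally show "(\<Sum>a<2. Q_trans r a b) = 1" .
  qed
  then have "(\<Sum>r<D. \<Sum>a<2. Q_trans r a b) = D" by simp
  then have "(\<Sum>a<2. \<Sum>r<D. Q_trans r a b) = D" by (subst sum.swap)
  then show ?thesis by (simp add: avg_trans_def D_def flip: sum_divide_distrib)
qed

lemma avg_trans_rowsum: assumes U: "unitary_mat Q"
  shows "(\<Sum>b<2. avg_trans 0 b) = 1"
proof -
  define D where "D = (2::nat) ^ (w - 1)"
  have "(\<Sum>b<2. \<Sum>r<D. Q_trans r 0 b) = (\<Sum>b<2. \<Sum>r<D. \<Sum>r'<D. (cmod (Q $$ (r', b * D + r)))\<^sup>2)"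
    by (simp add: Q_trans_def D_def)
  also have "\<dots> = (\<Sum>y<2*D. \<Sum>r'<D. (cmod (Q $$ (r', y)))\<^sup>2)"
    by (simp add: sum_lessThan_mult_blocks)
  also have "\<dots> = (\<Sum>r'<D. \<Sum>y<2*D. (cmod (Q $$ (r', y)))\<^sup>2)"
    by (rule sum.swap)
  also have "\<dots> = (\<Sum>r'<D. 1)"
    using unitary_row_norm[OF Q_carrier U] two_pow_w by (intro sum.cong refl) (auto simp: D_def)
  finally have "(\<Sum>b<2. \<Sum>r<D. Q_trans r 0 b) = D" by simp
  then show ?thesis by (simp add: avg_trans_def D_def flip: sum_divide_distrib)
qed

lemma avg_trans_00:
  assumes U: "unitary_mat Q"
  shows "avg_trans 0 0 = p_acc w Q 1"
proof -
  have "p_acc w Q 1 = (\<Sum>i<2 ^ (w - 1). \<Sum>x<2 ^ w.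
      if qbit w 0 x = 0 then (cmod (Q $$ (x, i)))\<^sup>2 else 0) / 2 ^ (w - 1)"
    by (rule p_acc_1_column_sum[OF Q_carrier w1])
  also have "\<dots> = (\<Sum>i<2 ^ (w - 1). \<Sum>x<2 ^ (w - 1). (cmod (Q $$ (x, i)))\<^sup>2) / 2 ^ (w - 1)"
    by (simp add: sum_qbit_0_eq_0[OF w1])
  finally show ?thesis by (simp add: avg_trans_def Q_trans_def)
qed

lemma compose_avg_step_op_eq_chain_exp: "c < 2 ^ l \<Longrightarrow> compose_ops (\<lambda>_. avg_step_op) t h c q = chain_exp avg_trans t q (\<lambda>k a. h ((c + k) mod 2 ^ l) a)"
proof (induction t arbitrary: h)
  case 0 then show ?case by simp
next
  case (Suc t)
  have "compose_ops (\<lambda>_. avg_step_op) (Suc t) h c q = chain_exp avg_trans t q (\<lambda>k b. avg_step_op h ((c + k) mod 2 ^ l) b)"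
    using Suc by simp
  also have "\<dots> = chain_exp avg_trans (Suc t) q (\<lambda>k a. h ((c + k) mod 2 ^ l) a)"
    by (simp add: avg_step_op_def mod_add_left_eq add.assoc)
  finally show ?case .
qed

definition "accept_ind c q = (if c < N then 1 else 0 :: real)"

lemma accept_ind_qbit:
  "x < 2 ^ n \<Longrightarrow> (if qbit n 0 x = 0 then A else 0) = A * accept_ind (C_val x) (Q_val x)"
proof -
  assume x: "x < 2 ^ n"
  have q: "qbit n 0 x = qbit l 0 (C_val x)" using qbit_C_val[of 0 x] l1 by simp
  have "(2::nat) ^ l = 2 * 2 ^ (l - 1)" using l1 by (cases l) auto
  then have two_pow_pred_l: "(2::nat) ^ (l - 1) = N" using two_pow_l by simp
  have "C_val x < 2 * N" using C_val_less[of x] two_pow_l by simp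
  then have "C_val x div N < 2" using N_ge1 by (simp add: div_less_2)
  moreover have "qbit l 0 (C_val x) = (C_val x div N) mod 2"
    unfolding qbit_def using two_pow_pred_l by simp
  ultimately have "qbit l 0 (C_val x) = 0 \<longleftrightarrow> C_val x < N"
    using N_ge1 by (auto simp: div_eq_0_iff)
  then show ?thesis using q by (simp add: accept_ind_def)
qed

lemma avg_trans_bit_chain:
  assumes U: "unitary_mat Q" and d: "\<bar>2 * avg_trans 0 0 - 1\<bar> \<le> 1/4"
  shows "bit_chain avg_trans (2 * avg_trans 0 0 - 1)"
proof
  define p where "p = avg_trans 0 0"
  have sum2: "(\<Sum>a<2. f a) = f 0 + f 1" for f :: "nat \<Rightarrow> real" by (simp add: numeral_2_eq_2)
  have T10: "avg_trans 1 0 = 1 - p" using avg_trans_colsum[OF U, of 0] by (simp add: p_def sum2)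
  have T01: "avg_trans 0 1 = 1 - p" using avg_trans_rowsum[OF U] by (simp add: p_def sum2)
  have T11: "avg_trans 1 1 = p" using avg_trans_colsum[OF U, of 1] T01 by (simp add: sum2)
  show "avg_trans a b \<ge> 0" for a b by (rule avg_trans_nonneg)
  show "(\<Sum>a<2. avg_trans a b) = 1" if "b < 2" for b using that by (rule avg_trans_colsum[OF U])
  show "(\<Sum>a<2. avg_trans a b * (2 * real a - 1)) = (2 * avg_trans 0 0 - 1) * (2 * real b - 1)"
    if "b < 2" for b
    using that T10 T01 T11 by (auto simp: sum2 p_def dest!: less_2_cases)
  show "\<bar>2 * avg_trans 0 0 - 1\<bar> \<le> 1/4" by (rule d)
qed

lemma p_acc_R1_eq_chain_exp:
  "p_acc n (R1 w N l Q) 1 = (\<Sum>q<2. chain_exp avg_trans (2 * N) q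
      (\<lambda>k a. \<Sum>c<N. accept_ind ((c + k) mod (2 * N)) a)) / (2 * real N)"
proof -
  define U where "U = R1 w N l Q"
  define F where "F = compose_ops (\<lambda>_. avg_step_op) (2 * N) accept_ind"
  have U_carrier: "U \<in> carrier_mat (2 ^ n) (2 ^ n)" unfolding U_def R1_def by (rule R1_upto_carrier)
  have pow: "(2::real) ^ (n - 1) = 2 ^ (n - l - 1) * (2 * real N)"
  proof -
    have "(2::real) ^ (n - 1) = 2 ^ (n - l - 1) * 2 ^ l" using l_less_n by (simp flip: power_add)
    moreover have "(2::real) ^ l = 2 * real N" using arg_cong[OF two_pow_l, of real] by simp
    ultimately show ?thesis by simp
  qed
  have "p_acc n U 1 = (\<Sum>i<2 ^ (n - 1). \<Sum>x<2 ^ n.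
      if qbit n 0 x = 0 then (cmod (U $$ (x, i)))\<^sup>2 else 0) / 2 ^ (n - 1)"
    by (rule p_acc_1_column_sum[OF U_carrier n_ge1])
  also have "\<dots> = (\<Sum>i<2 ^ (n - 1). \<Sum>x<2 ^ n.
      (cmod (U $$ (x, i)))\<^sup>2 * accept_ind (C_val x) (Q_val x)) / 2 ^ (n - 1)"
    by (simp add: accept_ind_qbit)
  also have "\<dots> = (\<Sum>i<2 ^ (n - 1). F (C_val i) (Q_val i)) / 2 ^ (n - 1)"
    unfolding U_def R1_def F_def by (subst average_column_norm) auto
  also have "\<dots> = (\<Sum>c<N. \<Sum>q<2. F c q) / (2 * real N)"
    unfolding sum_half_by_counter pow by simp
  also have "(\<Sum>c<N. \<Sum>q<2. F c q) =
      (\<Sum>q<2. \<Sum>c<N. chain_exp avg_trans (2 * N) q (\<lambda>k a. accept_ind ((c + k) mod (2 * N)) a))"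
    using two_pow_l
    by (subst sum.swap) (intro sum.cong refl, simp add: F_def compose_avg_step_op_eq_chain_exp)
  finally show ?thesis by (simp add: U_def chain_exp_sum)
qed

lemma p_acc_R1_le:
  assumes U: "unitary_mat Q" and d: "\<bar>2 * avg_trans 0 0 - 1\<bar> \<le> 1/4"
  shows "p_acc n (R1 w N l Q) 1 \<le> sqrt (5 * real N / 6) / real N"
proof -
  interpret bit_chain avg_trans "2 * avg_trans 0 0 - 1"
    by (rule avg_trans_bit_chain[OF U d])
  have "chain_exp avg_trans (2 * N) q (\<lambda>k a. \<Sum>c<N. accept_ind ((c + k) mod (2 * N)) a)
      \<le> sqrt (5 * real N / 6)" if "q < 2" for q
  proof -
    have "chain_exp avg_trans (2 * N) q (\<lambda>k a. \<Sum>c<N. accept_ind ((c + k) mod (2 * N)) a)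
        \<le> chain_exp avg_trans (2 * N) q (\<lambda>k a. \<bar>real k - real N\<bar>)"
      by (rule chain_exp_mono[OF that])
        (use sum_shifted_below_le_dist N_ge1 in \<open>simp add: accept_ind_def\<close>)
    also have "\<dots> \<le> sqrt (5 * real N / 6)" by (rule chain_exp_dist_le[OF that])
    finally show ?thesis .
  qed
  then have "p_acc n (R1 w N l Q) 1 \<le> (\<Sum>q<(2::nat). sqrt (5 * real N / 6)) / (2 * real N)"
    unfolding p_acc_R1_eq_chain_exp using N_ge1 by (intro divide_right_mono sum_mono) auto
  then show ?thesis using N_ge1 by simp
qed

end

theorem proposition14:
  fixes Q :: "complex mat" and w N m :: nat and \<epsilon> :: real
  assumes "w \<ge> 1"
    and "Q \<in> carrier_mat (2 ^ w) (2 ^ w)" and "unitary_mat Q"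
    and "N = 2 ^ m" and "N \<ge> 64"
    and "0 \<le> \<epsilon>" and "\<epsilon> \<le> 1 / 8"
    and "3 * real N powr (-1/3) + 4 * \<epsilon> \<le> 1"
    and "1 / 2 - \<epsilon> \<le> p_acc w Q 1" and "p_acc w Q 1 \<le> 1 / 2 + \<epsilon>"
  shows "p_acc (R1_qubits w N (m + 1)) (R1 w N (m + 1) Q) 1 < 3 * real N powr (-1/3) + 4 * \<epsilon>"
proof -
  interpret R1_circuit w N "m + 1" Q
    by unfold_locales (use assms(1,2,4) in auto)
  have "\<bar>2 * avg_trans 0 0 - 1\<bar> \<le> 1/4"
    using assms(7,9,10) unfolding avg_trans_00[OF assms(3)] abs_le_iff by linarith
  then have "p_acc (R1_qubits w N (m + 1)) (R1 w N (m + 1) Q) 1 \<le> sqrt (5 * real N / 6) / real N"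
    using p_acc_R1_le[OF assms(3)] unfolding n_def by blast
  also have "\<dots> < real N powr (-1/3)"
    using assms(5) by (intro sqrt_bound_lt_powr) simp
  also have "\<dots> \<le> 3 * real N powr (-1/3) + 4 * \<epsilon>"
    using assms(6) by simp
  finally show ?thesis .
qed

end
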